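(* Let $f,g:\mathbb{R}^n\to[0,+\infty)$ and $h_1,h_2:\mathbb{R}^n\to\mathbb{R}$, let $C\subseteq\mathbb{R}^n$ be closed and convex, $\Omega:=\{x:g(x)\neq0\}$, $C\cap\Omega\neq\emptyset$, and assume: $f$ is convex; $g$ is differentiable with locally Lipschitz gradient; $h_1$ is differentiable with locally Lipschitz gradient; $h_2$ is convex. Let $F$, $H$ and Algorithm 1 be as in the context, with $x^0\in\mathrm{dom}F$, assume $\mathcal{X}_0:=\{x\in\mathrm{dom}F:F(x)\le F(x^0)\}$ is compact, and let $\{(x^k,z^k,c_k):k\in\mathbb{N}\}$ be generated by Algorithm 1. Then: (i) there exists $a>0$ such that $H(x^{k+1},z^k,c_{k+1})+a\|x^{k+1}-x^k\|_2^2\le H(x^k,z^{k-1},c_k)$ for all integers $k\ge1$; (ii) there exists $b>0$ such that $\mathrm{dist}\big(0,\partial H(x^{k+1},z^k,c_{k+1})\big)\le b\|x^{k+1}-x^k\|_2$ for all $k\in\mathbb{N}$.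
   Context: $F(x)=f^2(x)/g(x)+h_1(x)-h_2(x)$ if $x\in\Omega\cap C$, $F(x)=+\infty$ otherwise. $\iota_C$ is the indicator of $C$, $h_2^\star$ the convex conjugate of $h_2$, $\mathrm{prox}_\varphi(y)=\arg\min_x\{\varphi(x)+\frac12\|x-y\|_2^2\}$. $H:\mathbb{R}^n\times\mathbb{R}^n\times\mathbb{R}\to(-\infty,+\infty]$, $H(x,z,c)=2cf(x)+\iota_C(x)-c^2g(x)+h_1(x)+h_2^\star(z)-\langle x,z\rangle$; $\partial H$ is its limiting subdifferential on $\mathbb{R}^{2n+1}$, and $\partial h_2$ is the convex subdifferential. Algorithm 1: given $x^0\in\mathrm{dom}F$, $0<\underline{\alpha}<\overline{\alpha}$, $\sigma>0$, $0<r<1$, for $k=0,1,2,\dots$: (Step 1) compute $c_k=f(x^k)/g(x^k)$, choose $z^k\in\partial h_2(x^k)$, set $\alpha:=\widetilde{\alpha}_k\in[\underline{\alpha},\overline{\alpha}]$; (Step 2) compute $\widehat{x}^k\in\mathrm{prox}_{2\alpha c_kf+\iota_C}\big(x^k-\alpha(\nabla h_1(x^k)-c_k^2\nabla g(x^k)-z^k)\big)$; if $\widehat{x}^k\in\Omega$ and $H(\widehat{x}^k,z^k,f(\widehat{x}^k)/g(\widehat{x}^k))+\frac{\sigma}{2}\|\widehat{x}^k-x^k\|_2^2\le F(x^k)$, set $x^{k+1}=\widehat{x}^k$, $\alpha_k:=\alpha$ and go to the next $k$; otherwise set $\alpha:=r\alpha$ and repeat Step 2. *)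

theory Defs
  imports "HOL-Analysis.Analysis"
begin

definition ind :: "'a set \<Rightarrow> 'a \<Rightarrow> ereal" where
  "ind C x = (if x \<in> C then 0 else \<infinity>)"

definition conj_fun :: "('a::real_inner \<Rightarrow> real) \<Rightarrow> 'a \<Rightarrow> ereal" where
  "conj_fun h z = (SUP x. ereal (inner x z - h x))"

definition cvx_subdiff :: "('a::real_inner \<Rightarrow> real) \<Rightarrow> 'a \<Rightarrow> 'a set" where
  "cvx_subdiff h x = {z. \<forall>y. h y \<ge> h x + inner z (y - x)}"

definition frechet_subdiff :: "('a::real_inner \<Rightarrow> ereal) \<Rightarrow> 'a \<Rightarrow> 'a set" where
  "frechet_subdiff \<phi> x =
     (if \<bar>\<phi> x\<bar> = \<infinity> then {} else
      {v. \<forall>e>0. \<exists>d>0. \<forall>y. norm (y - x) < d \<longrightarrow>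
            ereal (real_of_ereal (\<phi> x) + inner v (y - x) - e * norm (y - x)) \<le> \<phi> y})"

definition limiting_subdiff :: "('a::real_inner \<Rightarrow> ereal) \<Rightarrow> 'a \<Rightarrow> 'a set" where
  "limiting_subdiff \<phi> x =
     (if \<bar>\<phi> x\<bar> = \<infinity> then {} else
      {v. \<exists>xs vs. xs \<longlonglongrightarrow> x \<and> (\<lambda>k. \<phi> (xs k)) \<longlonglongrightarrow> \<phi> x \<and>
            (\<forall>k. vs k \<in> frechet_subdiff \<phi> (xs k)) \<and> vs \<longlonglongrightarrow> v})"

definition prox :: "('a::real_inner \<Rightarrow> ereal) \<Rightarrow> 'a \<Rightarrow> 'a set" where
  "prox \<phi> y = {x. \<forall>u. \<phi> x + ereal ((norm (x - y))\<^sup>2 / 2) \<le> \<phi> u + ereal ((norm (u - y))\<^sup>2 / 2)}"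

definition Fobj :: "('a \<Rightarrow> real) \<Rightarrow> ('a \<Rightarrow> real) \<Rightarrow> ('a \<Rightarrow> real) \<Rightarrow> ('a \<Rightarrow> real) \<Rightarrow> 'a set \<Rightarrow> 'a \<Rightarrow> ereal" where
  "Fobj f g h1 h2 C x =
     (if x \<in> {y. g y \<noteq> 0} \<inter> C then ereal ((f x)\<^sup>2 / g x + h1 x - h2 x) else \<infinity>)"

definition Hfun :: "('a::real_inner \<Rightarrow> real) \<Rightarrow> ('a \<Rightarrow> real) \<Rightarrow> ('a \<Rightarrow> real) \<Rightarrow> ('a \<Rightarrow> real) \<Rightarrow> 'a set
                     \<Rightarrow> 'a \<times> 'a \<times> real \<Rightarrow> ereal" where
  "Hfun f g h1 h2 C = (\<lambda>(x, z, c).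
     ereal (2 * c * f x) + ind C x - ereal (c\<^sup>2 * g x) + ereal (h1 x) + conj_fun h2 z - ereal (inner x z))"

text \<open>Acceptance test of the line search in Step 2 of Algorithm 1.\<close>
definition accept :: "('a::real_inner \<Rightarrow> real) \<Rightarrow> ('a \<Rightarrow> real) \<Rightarrow> ('a \<Rightarrow> real) \<Rightarrow> ('a \<Rightarrow> real) \<Rightarrow> 'a set
                      \<Rightarrow> real \<Rightarrow> 'a \<Rightarrow> 'a \<Rightarrow> 'a \<Rightarrow> bool" where
  "accept f g h1 h2 C \<sigma> xk zk xh \<longleftrightarrow>
     g xh \<noteq> 0 \<and>
     Hfun f g h1 h2 C (xh, zk, f xh / g xh) + ereal (\<sigma> / 2 * (norm (xh - xk))\<^sup>2) \<le> Fobj f g h1 h2 C xk"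

definition trial_set :: "('a::real_inner \<Rightarrow> real) \<Rightarrow> ('a \<Rightarrow> real) \<Rightarrow> 'a set \<Rightarrow> ('a \<Rightarrow> 'a) \<Rightarrow> ('a \<Rightarrow> 'a)
                         \<Rightarrow> real \<Rightarrow> 'a \<Rightarrow> 'a \<Rightarrow> real \<Rightarrow> 'a set" where
  "trial_set f g C dg dh1 ck xk zk \<alpha> =
     prox (\<lambda>u. ereal (2 * \<alpha> * ck * f u) + ind C u) (xk - \<alpha> *\<^sub>R (dh1 xk - ck\<^sup>2 *\<^sub>R dg xk - zk))"

text \<open>One iteration of Algorithm 1: from x^k (with c_k, z^k, initial step atil) to x^(k+1) via
  backtracking; xh i is the point computed at the i-th trial (step size r^i * atil), trials
  0..j-1 are rejected and trial j is accepted.\<close>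
definition alg_step :: "('a::real_inner \<Rightarrow> real) \<Rightarrow> ('a \<Rightarrow> real) \<Rightarrow> ('a \<Rightarrow> real) \<Rightarrow> ('a \<Rightarrow> real) \<Rightarrow> 'a set
                        \<Rightarrow> ('a \<Rightarrow> 'a) \<Rightarrow> ('a \<Rightarrow> 'a) \<Rightarrow> real \<Rightarrow> real
                        \<Rightarrow> 'a \<Rightarrow> real \<Rightarrow> 'a \<Rightarrow> real \<Rightarrow> 'a \<Rightarrow> bool" where
  "alg_step f g h1 h2 C dg dh1 \<sigma> r xk ck zk atil xnext \<longleftrightarrow>
     (\<exists>j::nat. \<exists>xh::nat \<Rightarrow> 'a.
        (\<forall>i\<le>j. xh i \<in> trial_set f g C dg dh1 ck xk zk (r ^ i * atil)) \<and>
        (\<forall>i<j. \<not> accept f g h1 h2 C \<sigma> xk zk (xh i)) \<and>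
        accept f g h1 h2 C \<sigma> xk zk (xh j) \<and>
        xnext = xh j)"

end

theory Submission
  imports Defs
begin

text \<open>Every accepted step satisfies \<open>H (x (k+1), z k, c (k+1)) + \<sigma>/2 \<parallel>x (k+1) - x k\<parallel>\<^sup>2 \<le> F (x k)\<close>,
  and the Fenchel--Young inequality gives \<open>F (x k) \<le> H (x k, z (k-1), c k)\<close>; this is (i) with
  \<open>a = \<sigma>/2\<close>. Consequently \<open>F\<close> decreases along the iterates, which stay in the compact sublevel
  set \<open>X0\<close>, where \<open>g\<close> is bounded away from zero. Near \<open>X0\<close> all data are bounded and Lipschitz,
  so the line search accepts every step size below a fixed threshold and the accepted step sizes
  are bounded below. For (ii), the optimality condition of the proximal step yields a Frechet
  subgradient of \<open>H\<close> at \<open>(x (k+1), z k, c (k+1))\<close> whose norm is at most a multiple of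
  \<open>\<parallel>x (k+1) - x k\<parallel>\<close>, the factor depending on the Lipschitz constants and on the lower step bound.\<close>

lemma conj_fun_ge: "ereal (inner x z - h x) \<le> conj_fun h z"
  unfolding conj_fun_def by (rule SUP_upper) auto

lemma conj_fun_eq_if_cvx_subdiff:
  assumes "z \<in> cvx_subdiff h x"
  shows "conj_fun h z = ereal (inner x z - h x)"
proof (rule antisym)
  show "conj_fun h z \<le> ereal (inner x z - h x)"
    unfolding conj_fun_def
  proof (rule SUP_least)
    fix y
    have "h y \<ge> h x + inner z (y - x)" using assms unfolding cvx_subdiff_def by auto
    then show "ereal (inner y z - h y) \<le> ereal (inner x z - h x)"
      by (simp add: inner_diff_right inner_commute)
  qed
qed (rule conj_fun_ge)

lemma conj_fun_neq_minf: "conj_fun h z \<noteq> -\<infinity>"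
  using conj_fun_ge[of 0 z h] by auto

lemma Hfun_eq:
  assumes "x \<in> C"
  shows "Hfun f g h1 h2 C (x, z, c) = ereal (2*c*f x - c\<^sup>2 * g x + h1 x - inner x z) + conj_fun h2 z"
  using assms conj_fun_neq_minf[of h2 z] unfolding Hfun_def ind_def
  by (cases "conj_fun h2 z") (simp_all add: algebra_simps)

lemma Hfun_eq_infinity:
  assumes "x \<notin> C"
  shows "Hfun f g h1 h2 C (x, z, c) = \<infinity>"
  using assms conj_fun_neq_minf[of h2 z] unfolding Hfun_def ind_def
  by (cases "conj_fun h2 z") simp_all

lemma Hfun_eq_if_cvx_subdiff:
  assumes "x' \<in> C" and "z \<in> cvx_subdiff h2 x"
  shows "Hfun f g h1 h2 C (x', z, c)
           = ereal (2*c*f x' - c\<^sup>2 * g x' + h1 x' - inner x' z + (inner x z - h2 x))"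
  unfolding Hfun_eq[OF assms(1)] conj_fun_eq_if_cvx_subdiff[OF assms(2)] by simp

lemma Hfun_ge:
  assumes "x' \<in> C"
  shows "ereal (2*c*f x' - c\<^sup>2 * g x' + h1 x' - inner x' z + (inner x z - h2 x))
           \<le> Hfun f g h1 h2 C (x', z, c)"
  unfolding Hfun_eq[OF assms]
  using add_left_mono[OF conj_fun_ge[of x z h2], of "ereal (2*c*f x' - c\<^sup>2 * g x' + h1 x' - inner x' z)"]
  by simp

lemma Fobj_less_infinity_iff: "Fobj f g h1 h2 C u < \<infinity> \<longleftrightarrow> u \<in> C \<and> g u \<noteq> 0"
  unfolding Fobj_def by auto

lemma Fobj_le_Hfun:
  assumes "g x \<noteq> 0"
  shows "Fobj f g h1 h2 C x \<le> Hfun f g h1 h2 C (x, z, f x / g x)"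
proof (cases "x \<in> C")
  case True
  have "Fobj f g h1 h2 C x
      = ereal (2 * (f x / g x) * f x - (f x / g x)\<^sup>2 * g x + h1 x - inner x z + (inner x z - h2 x))"
    unfolding Fobj_def using assms True by (simp add: power2_eq_square field_simps)
  also have "\<dots> \<le> Hfun f g h1 h2 C (x, z, f x / g x)" by (rule Hfun_ge[OF True])
  finally show ?thesis .
qed (simp add: Hfun_eq_infinity)

section \<open>Subgradients of convex functions\<close>

lemma epigraph_separating_hyperplane:
  fixes \<phi> :: "'a::euclidean_space \<Rightarrow> real"
  assumes cvx: "convex_on UNIV \<phi>" and C: "convex C" and xh: "xh \<in> C"
    and min: "\<And>u. u \<in> C \<Longrightarrow> \<phi> xh \<le> \<phi> u"
  obtains a1 \<beta> b where "(a1, \<beta>) \<noteq> 0"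
    and "\<And>y s. 0 \<le> s \<Longrightarrow> inner a1 y + \<beta> * (\<phi> y - \<phi> xh + s) \<le> b"
    and "\<And>u t. u \<in> C \<Longrightarrow> t < 0 \<Longrightarrow> b \<le> inner a1 u + \<beta> * t"
proof -
  define A where "A = epigraph UNIV (\<lambda>y. \<phi> y - \<phi> xh)"
  define B where "B = C \<times> {..<(0::real)}"
  have "convex A" unfolding A_def convex_epigraph
    using convex_on_diff[OF cvx, of "\<lambda>_. \<phi> xh"] by (simp add: concave_on_const)
  moreover have "convex B" unfolding B_def by (intro convex_Times C) auto
  moreover have "(xh, 0) \<in> A" unfolding A_def mem_epigraph by simp
  moreover have "B \<noteq> {}" unfolding B_def using xh by auto
  moreover have "A \<inter> B = {}" unfolding A_def B_def by (force simp: mem_epigraph dest: min)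
  ultimately obtain p b where p: "p \<noteq> 0" and pA: "\<forall>q\<in>A. inner p q \<le> b"
    and pB: "\<forall>q\<in>B. inner p q \<ge> b"
    using separating_hyperplane_sets[of A B] by blast
  obtain a1 \<beta> where pe: "p = (a1, \<beta>)" by (cases p)
  show ?thesis
  proof (rule that)
    show "(a1, \<beta>) \<noteq> 0" using p pe by simp
    show "inner a1 y + \<beta> * (\<phi> y - \<phi> xh + s) \<le> b" if "0 \<le> s" for y s
    proof -
      have "(y, \<phi> y - \<phi> xh + s) \<in> A" unfolding A_def mem_epigraph using that by auto
      then show ?thesis using pA pe by force
    qed
    show "b \<le> inner a1 u + \<beta> * t" if "u \<in> C" "t < 0" for u t
      using pB pe that unfolding B_def by force
  qed
qed

text \<open>The separating hyperplane is not vertical, because the epigraph projects onto the whole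
  space, and it passes through \<open>(xh, \<phi> xh)\<close>.\<close>

lemma epigraph_separation_at_minimizer:
  fixes \<phi> :: "'a::euclidean_space \<Rightarrow> real"
  assumes cvx: "convex_on UNIV \<phi>" and C: "convex C" and xh: "xh \<in> C"
    and min: "\<And>u. u \<in> C \<Longrightarrow> \<phi> xh \<le> \<phi> u"
  obtains a1 \<beta> where "\<beta> < 0" and "\<And>y. inner a1 y + \<beta> * (\<phi> y - \<phi> xh) \<le> inner a1 xh"
    and "\<And>u. u \<in> C \<Longrightarrow> inner a1 xh \<le> inner a1 u"
proof -
  obtain a1 \<beta> b where p: "(a1, \<beta>) \<noteq> 0"
    and A1: "\<And>y s. 0 \<le> s \<Longrightarrow> inner a1 y + \<beta> * (\<phi> y - \<phi> xh + s) \<le> b"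
    and B1: "\<And>u t. u \<in> C \<Longrightarrow> t < 0 \<Longrightarrow> b \<le> inner a1 u + \<beta> * t"
    using epigraph_separating_hyperplane[OF cvx C xh min] by metis
  have b0: "inner a1 xh \<le> b" using A1[of 0 xh] by simp
  have \<beta>neg: "\<beta> < 0"
  proof (rule ccontr)
    assume "\<not> \<beta> < 0"
    then consider "\<beta> > 0" | "\<beta> = 0" by linarith
    then show False
    proof cases
      case 1
      then show False using A1[of "(b - inner a1 xh + 1) / \<beta>" xh] b0 by simp
    next
      case 2
      then have "inner a1 a1 > 0" using p by (auto simp: zero_prod_def)
      then have "inner a1 (xh + ((b - inner a1 xh + 1) / inner a1 a1) *\<^sub>R a1) = b + 1"
        by (simp add: inner_add_right)
      then show False using A1[of 0 "xh + ((b - inner a1 xh + 1) / inner a1 a1) *\<^sub>R a1"] 2 by simp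
    qed
  qed
  have Bu: "inner a1 u \<ge> b" if "u \<in> C" for u
  proof (rule ccontr)
    assume "\<not> inner a1 u \<ge> b"
    then have "(b - inner a1 u) / (2 * \<beta>) < 0" using \<beta>neg by (simp add: divide_pos_neg)
    from B1[OF that this] show False using \<beta>neg \<open>\<not> inner a1 u \<ge> b\<close> by (simp add: field_simps)
  qed
  have b: "b = inner a1 xh" using Bu[OF xh] b0 by simp
  show ?thesis
  proof (rule that[OF \<beta>neg])
    show "inner a1 y + \<beta> * (\<phi> y - \<phi> xh) \<le> inner a1 xh" for y using A1[of 0 y] b by simp
    show "inner a1 xh \<le> inner a1 u" if "u \<in> C" for u using Bu[OF that] b by simp
  qed
qed

lemma cvx_subdiff_at_minimizer:
  fixes \<phi> :: "'a::euclidean_space \<Rightarrow> real"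
  assumes cvx: "convex_on UNIV \<phi>" and C: "convex C" and xh: "xh \<in> C"
    and min: "\<And>u. u \<in> C \<Longrightarrow> \<phi> xh \<le> \<phi> u"
  shows "\<exists>a \<in> cvx_subdiff \<phi> xh. \<forall>u\<in>C. 0 \<le> inner a (u - xh)"
proof -
  obtain a1 \<beta> where \<beta>neg: "\<beta> < 0" and epi: "\<And>y. inner a1 y + \<beta> * (\<phi> y - \<phi> xh) \<le> inner a1 xh"
    and normal: "\<And>u. u \<in> C \<Longrightarrow> inner a1 xh \<le> inner a1 u"
    using epigraph_separation_at_minimizer[OF cvx C xh min] by metis
  define a where "a = (- 1 / \<beta>) *\<^sub>R a1"
  have "\<phi> y \<ge> \<phi> xh + inner a (y - xh)" for y
  proof -
    have "\<beta> * (\<phi> y - \<phi> xh) \<le> - inner a1 (y - xh)" using epi[of y] by (simp add: inner_diff_right)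
    then have "\<phi> y - \<phi> xh \<ge> (- inner a1 (y - xh)) / \<beta>"
      by (subst neg_divide_le_eq[OF \<beta>neg]) (simp add: mult.commute)
    then show ?thesis unfolding a_def by simp
  qed
  moreover have "0 \<le> inner a (u - xh)" if "u \<in> C" for u
    using normal[OF that] \<beta>neg unfolding a_def
    by (simp add: inner_diff_right divide_right_mono_neg)
  ultimately show ?thesis unfolding cvx_subdiff_def by blast
qed

lemma cvx_subdiff_nonempty:
  fixes \<phi> :: "'a::euclidean_space \<Rightarrow> real"
  assumes "convex_on UNIV \<phi>"
  shows "cvx_subdiff \<phi> x \<noteq> {}"
  using cvx_subdiff_at_minimizer[OF assms, of "{x}" x] by auto

text \<open>Restricting the inequality to \<open>xh + t (u - xh)\<close> and letting \<open>t \<rightarrow> 0\<close> removes the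
  quadratic term.\<close>

lemma convex_on_drop_quadratic_term:
  fixes \<psi> :: "'a::euclidean_space \<Rightarrow> real"
  assumes cvx: "convex_on UNIV \<psi>" and C: "convex C" and xh: "xh \<in> C" and M: "M \<ge> 0"
    and quad: "\<And>u. u \<in> C \<Longrightarrow> inner w (u - xh) - M * (norm (u - xh))\<^sup>2 \<le> \<psi> u - \<psi> xh"
    and u: "u \<in> C"
  shows "inner w (u - xh) \<le> \<psi> u - \<psi> xh"
proof (rule ccontr)
  define D where "D = inner w (u - xh) - (\<psi> u - \<psi> xh)"
  assume "\<not> inner w (u - xh) \<le> \<psi> u - \<psi> xh"
  then have D: "D > 0" unfolding D_def by simp
  define N where "N = (norm (u - xh))\<^sup>2"
  have MN: "M * N + 1 > 0" using M unfolding N_def by (simp add: add_nonneg_pos)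
  define t where "t = min 1 (D / (2 * (M * N + 1)))"
  have t0: "t > 0" unfolding t_def using D MN by simp
  have t1: "t \<le> 1" unfolding t_def by simp
  define ut where "ut = xh + t *\<^sub>R (u - xh)"
  have ut_eq: "ut = (1 - t) *\<^sub>R xh + t *\<^sub>R u" unfolding ut_def by (simp add: algebra_simps)
  have "\<psi> ut \<le> (1 - t) * \<psi> xh + t * \<psi> u"
    unfolding ut_eq using convex_onD[OF cvx, of t xh u] t0 t1 by simp
  moreover have "ut \<in> C" unfolding ut_eq using C xh u t0 t1 by (simp add: convex_alt)
  then have "t * inner w (u - xh) - M * (t\<^sup>2 * N) \<le> \<psi> ut - \<psi> xh"
    using quad[of ut] t0 unfolding ut_def N_def by (simp add: power_mult_distrib)
  ultimately have "t * D \<le> t * (t * (M * N))"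
    unfolding D_def by (simp add: algebra_simps power2_eq_square)
  then have "D \<le> t * (M * N)" using t0 by simp
  also have "\<dots> \<le> D / (2 * (M * N + 1)) * (M * N + 1)"
    using t_def MN D M by (intro mult_mono) (auto simp: N_def)
  also have "\<dots> = D / 2" using MN by (simp add: field_simps)
  finally show False using D by simp
qed

lemma prox_optimality_cvx_subdiff:
  fixes f :: "'a::euclidean_space \<Rightarrow> real"
  assumes cvx: "convex_on UNIV f" and C: "convex C" and xh: "xh \<in> C"
    and lam: "lam \<ge> 0" and M: "M \<ge> 0"
    and quad: "\<And>u. u \<in> C \<Longrightarrow> inner w (u - xh) - M * (norm (u - xh))\<^sup>2 \<le> lam * (f u - f xh)"
  shows "\<exists>s \<in> cvx_subdiff f xh. \<forall>u\<in>C. inner (w - lam *\<^sub>R s) (u - xh) \<le> 0"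
proof -
  have lam_f: "convex_on UNIV (\<lambda>u. lam * f u)" using cvx lam by auto
  have lin: "inner w (u - xh) \<le> lam * f u - lam * f xh" if "u \<in> C" for u
    using convex_on_drop_quadratic_term[OF lam_f C xh M _ that, of w] quad
    by (simp add: algebra_simps)
  show ?thesis
  proof (cases "lam = 0")
    case True
    then show ?thesis using lin cvx_subdiff_nonempty[OF cvx, of xh] by auto
  next
    case False
    define \<phi> where "\<phi> u = lam * f u - inner w u" for u
    have "convex_on UNIV (\<lambda>u. - inner w u)"
      unfolding convex_on_def by (simp add: inner_add_right)
    from convex_on_add[OF lam_f this] have "convex_on UNIV \<phi>" unfolding \<phi>_def by simp
    moreover have "\<phi> xh \<le> \<phi> u" if "u \<in> C" for u
      using lin[OF that] unfolding \<phi>_def by (simp add: inner_diff_right)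
    ultimately obtain a where a: "a \<in> cvx_subdiff \<phi> xh" and aC: "\<forall>u\<in>C. 0 \<le> inner a (u - xh)"
      using cvx_subdiff_at_minimizer[OF _ C xh] by blast
    define s where "s = (1 / lam) *\<^sub>R (w + a)"
    have "f y \<ge> f xh + inner s (y - xh)" for y
    proof -
      have "inner (w + a) (y - xh) \<le> lam * (f y - f xh)"
        using a unfolding cvx_subdiff_def \<phi>_def
        by (simp add: inner_diff_right inner_add_left algebra_simps)
      moreover have "inner s (y - xh) = inner (w + a) (y - xh) / lam" unfolding s_def by simp
      moreover have "inner (w + a) (y - xh) / lam \<le> f y - f xh"
        using calculation(1) lam False by (simp add: pos_divide_le_eq mult.commute)
      ultimately show ?thesis by simp
    qed
    then have "s \<in> cvx_subdiff f xh" unfolding cvx_subdiff_def by auto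
    moreover have "w - lam *\<^sub>R s = - a" unfolding s_def using False by simp
    ultimately show ?thesis using aC by (metis inner_minus_left neg_le_0_iff_le)
  qed
qed

lemma cvx_subdiff_norm_le:
  fixes \<phi> :: "'a::real_inner \<Rightarrow> real"
  assumes bound: "\<And>u. u \<in> cball x 1 \<Longrightarrow> \<bar>\<phi> u\<bar> \<le> M" and s: "s \<in> cvx_subdiff \<phi> x"
  shows "norm s \<le> 2 * M"
proof (cases "s = 0")
  case True
  then show ?thesis using bound[of x] by simp
next
  case False
  define u where "u = x + (1 / norm s) *\<^sub>R s"
  have "u \<in> cball x 1" unfolding u_def using False by (simp add: dist_norm)
  moreover have "\<phi> u \<ge> \<phi> x + inner s (u - x)" using s unfolding cvx_subdiff_def by auto
  moreover have "inner s (u - x) = norm s"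
    unfolding u_def using False by (simp add: power2_norm_eq_inner[symmetric] power2_eq_square)
  ultimately show ?thesis using bound[of u] bound[of x] by (simp add: abs_le_iff)
qed

lemma cvx_subdiff_norm_le_lipschitz:
  fixes \<phi> :: "'a::real_inner \<Rightarrow> real"
  assumes lip: "L-lipschitz_on (ball x e) \<phi>" and e: "e > 0" and s: "s \<in> cvx_subdiff \<phi> x"
  shows "norm s \<le> L"
proof (cases "s = 0")
  case True
  then show ?thesis using lipschitz_on_nonneg[OF lip] by simp
next
  case False
  define u where "u = x + (e / 2 / norm s) *\<^sub>R s"
  have ux: "norm (u - x) = e / 2" unfolding u_def using False e by simp
  then have "u \<in> ball x e" using e by (simp add: dist_norm norm_minus_commute)
  then have "\<bar>\<phi> u - \<phi> x\<bar> \<le> e / 2 * L"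
    using lipschitz_onD[OF lip, of u x] ux e by (simp add: dist_norm dist_real_def mult.commute)
  moreover have "\<phi> u \<ge> \<phi> x + inner s (u - x)" using s unfolding cvx_subdiff_def by blast
  moreover have "inner s (u - x) = e / 2 * norm s"
    unfolding u_def using False by (simp add: power2_norm_eq_inner[symmetric] power2_eq_square)
  ultimately have "e / 2 * norm s \<le> e / 2 * L" by linarith
  then show ?thesis using e by simp
qed

section \<open>Lipschitz estimates\<close>

lemma convex_on_locally_lipschitz:
  fixes \<phi> :: "'a::euclidean_space \<Rightarrow> real"
  assumes cvx: "convex_on UNIV \<phi>"
  shows "\<exists>U L. open U \<and> u \<in> U \<and> L-lipschitz_on U \<phi>"
proof -
  have "continuous_on (cball u 2) \<phi>"
    using convex_on_continuous[OF open_UNIV cvx] continuous_on_subset by blast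
  then obtain M where M: "\<And>v. v \<in> cball u 2 \<Longrightarrow> norm (\<phi> v) \<le> M"
    using continuous_on_compact_bound[OF compact_cball] by blast
  have subgrad: "norm s \<le> 2 * M" if "a \<in> ball u 1" "s \<in> cvx_subdiff \<phi> a" for a s
  proof (rule cvx_subdiff_norm_le[OF _ that(2)])
    fix v assume "v \<in> cball a 1"
    then have "v \<in> cball u 2" using that(1) dist_triangle[of u v a] by (simp add: dist_commute)
    then show "\<bar>\<phi> v\<bar> \<le> M" using M by simp
  qed
  have "(2 * M)-lipschitz_on (ball u 1) \<phi>"
  proof (rule lipschitz_onI)
    fix a b assume ab: "a \<in> ball u 1" "b \<in> ball u 1"
    obtain sa sb where sa: "sa \<in> cvx_subdiff \<phi> a" and sb: "sb \<in> cvx_subdiff \<phi> b"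
      using cvx_subdiff_nonempty[OF cvx] by blast
    have "\<bar>inner sa (b - a)\<bar> \<le> 2 * M * dist b a"
      using order_trans[OF Cauchy_Schwarz_ineq2 mult_right_mono[OF subgrad[OF ab(1) sa] norm_ge_zero]]
      by (simp add: dist_norm)
    moreover have "\<bar>inner sb (a - b)\<bar> \<le> 2 * M * dist a b"
      using order_trans[OF Cauchy_Schwarz_ineq2 mult_right_mono[OF subgrad[OF ab(2) sb] norm_ge_zero]]
      by (simp add: dist_norm)
    moreover have "\<phi> b \<ge> \<phi> a + inner sa (b - a)" "\<phi> a \<ge> \<phi> b + inner sb (a - b)"
      using sa sb unfolding cvx_subdiff_def by blast+
    ultimately show "dist (\<phi> a) (\<phi> b) \<le> 2 * M * dist a b"
      by (simp add: dist_real_def abs_le_iff dist_commute)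
  next
    show "0 \<le> 2 * M" using M[of u] by simp
  qed
  then show ?thesis by (intro exI[of _ "ball u 1"] exI[of _ "2 * M"]) simp
qed

lemma onorm_inner_le: "onorm (\<lambda>v. inner (a::'a::real_inner) v) \<le> norm a"
  by (rule onorm_bound) (auto simp: Cauchy_Schwarz_ineq2)

lemma has_gradient_locally_lipschitz:
  fixes \<phi> :: "'a::euclidean_space \<Rightarrow> real"
  assumes der: "\<And>u. (\<phi> has_derivative (\<lambda>v. inner (D u) v)) (at u)"
    and cont: "continuous_on UNIV D"
  shows "\<exists>U L. open U \<and> u \<in> U \<and> L-lipschitz_on U \<phi>"
proof -
  obtain M where "M \<ge> 0" and M: "\<And>v. v \<in> cball u 1 \<Longrightarrow> norm (D v) \<le> M"
    using continuous_on_compact_bound[OF compact_cball continuous_on_subset[OF cont]] by blast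
  then have "M-lipschitz_on (ball u 1) \<phi>"
    using der by (intro bounded_derivative_imp_lipschitz[where f'="\<lambda>u v. inner (D u) v"])
      (auto intro: has_derivative_at_withinI order_trans[OF onorm_inner_le])
  then show ?thesis by (intro exI[of _ "ball u 1"] exI[of _ M]) simp
qed

lemma locally_lipschitz_continuous_on:
  assumes "\<And>u. \<exists>U L. open U \<and> u \<in> U \<and> L-lipschitz_on U \<phi>"
  shows "continuous_on UNIV \<phi>"
  by (metis assms continuous_at_imp_continuous_on continuous_on_eq_continuous_at
      lipschitz_on_continuous_on)

lemma locally_lipschitz_imp_lipschitz_on_compact:
  fixes \<phi> :: "'a::metric_space \<Rightarrow> 'b::metric_space"
  assumes loc: "\<And>u. \<exists>U L. open U \<and> u \<in> U \<and> L-lipschitz_on U \<phi>" and K: "compact K"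
  obtains L where "L-lipschitz_on K \<phi>"
proof -
  have "local_lipschitz {0::real} K (\<lambda>_. \<phi>)"
  proof (rule local_lipschitzI)
    fix t u
    obtain U L where "open U" "u \<in> U" "L-lipschitz_on U \<phi>" using loc by blast
    then obtain e where "e > 0" "cball u e \<subseteq> U" by (meson open_contains_cball)
    then show "\<exists>e>0. \<exists>L. \<forall>t\<in>cball t e \<inter> {0}. L-lipschitz_on (cball u e \<inter> K) \<phi>"
      using \<open>L-lipschitz_on U \<phi>\<close> by (meson inf.coboundedI1 lipschitz_on_subset)
  qed
  moreover have "continuous_on {0::real} (\<lambda>t. \<phi> x)" for x by simp
  ultimately obtain L where "\<And>t. t \<in> {0::real} \<Longrightarrow> L-lipschitz_on K \<phi>"
    using local_lipschitz_compact_implies_lipschitz[OF _ K compact_sing] by blast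
  then show ?thesis using that by blast
qed

lemma has_gradient_remainder_le:
  fixes \<phi> :: "'a::euclidean_space \<Rightarrow> real"
  assumes der: "\<And>u. (\<phi> has_derivative (\<lambda>v. inner (D u) v)) (at u)"
    and lip: "L-lipschitz_on (cball x r) D" and y: "y \<in> cball x r"
  shows "\<bar>\<phi> y - \<phi> x - inner (D x) (y - x)\<bar> \<le> L * (norm (y - x))\<^sup>2"
proof -
  define \<rho> where "\<rho> = norm (y - x)"
  have sub: "cball x \<rho> \<subseteq> cball x r"
    using y by (intro subset_cball) (simp add: \<rho>_def dist_norm norm_minus_commute)
  define \<psi> where "\<psi> u = \<phi> u - inner (D x) u" for u
  have "(\<psi> has_derivative (\<lambda>v. inner (D u - D x) v)) (at u within cball x \<rho>)" for u
    unfolding \<psi>_def inner_diff_left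
    by (intro has_derivative_diff has_derivative_at_withinI[OF der]
        bounded_linear_imp_has_derivative bounded_linear_inner_right)
  moreover have "onorm (\<lambda>v. inner (D u - D x) v) \<le> L * \<rho>" if "u \<in> cball x \<rho>" for u
  proof -
    have "u \<in> cball x r" "x \<in> cball x r"
      using that sub y by (auto intro: order_trans[OF zero_le_dist])
    then have "norm (D u - D x) \<le> L * dist u x" using lipschitz_onD[OF lip] by (simp add: dist_norm)
    also have "\<dots> \<le> L * \<rho>"
      using that lipschitz_on_nonneg[OF lip] by (intro mult_left_mono) (auto simp: dist_commute)
    finally show ?thesis using onorm_inner_le order_trans by blast
  qed
  ultimately have "norm (\<psi> y - \<psi> x) \<le> L * \<rho> * norm (y - x)"
    by (intro differentiable_bound[OF convex_cball]) (auto simp: \<rho>_def dist_norm norm_minus_commute)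
  then show ?thesis unfolding \<psi>_def \<rho>_def by (simp add: inner_diff_right power2_eq_square algebra_simps)
qed

lemma lipschitz_on_divide:
  fixes \<phi> \<psi> :: "'a::metric_space \<Rightarrow> real"
  assumes lip\<phi>: "L\<phi>-lipschitz_on K \<phi>" and lip\<psi>: "L\<psi>-lipschitz_on K \<psi>"
    and bound\<phi>: "\<And>u. u \<in> K \<Longrightarrow> \<bar>\<phi> u\<bar> \<le> M\<phi>"
    and bound\<psi>: "\<And>u. u \<in> K \<Longrightarrow> m \<le> \<psi> u \<and> \<psi> u \<le> M\<psi>"
    and m: "0 < m" and M: "0 \<le> M\<phi>" "0 \<le> M\<psi>"
  shows "((L\<phi> * M\<psi> + M\<phi> * L\<psi>) / m\<^sup>2)-lipschitz_on K (\<lambda>u. \<phi> u / \<psi> u)"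
proof (rule lipschitz_onI)
  fix u v assume uv: "u \<in> K" "v \<in> K"
  have pos: "\<psi> u > 0" "\<psi> v > 0" using bound\<psi>[OF uv(1)] bound\<psi>[OF uv(2)] m by auto
  have "\<bar>(\<phi> u - \<phi> v) * \<psi> v\<bar> \<le> L\<phi> * dist u v * M\<psi>"
    unfolding abs_mult using lipschitz_onD[OF lip\<phi> uv] bound\<psi>[OF uv(2)] pos
    by (intro mult_mono) (auto simp: dist_real_def)
  moreover have "\<bar>\<phi> v * (\<psi> v - \<psi> u)\<bar> \<le> M\<phi> * (L\<psi> * dist u v)"
    unfolding abs_mult using lipschitz_onD[OF lip\<psi> uv] bound\<phi>[OF uv(2)] M
    by (intro mult_mono) (auto simp: dist_real_def abs_minus_commute)
  ultimately have num: "\<bar>(\<phi> u - \<phi> v) * \<psi> v + \<phi> v * (\<psi> v - \<psi> u)\<bar>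
      \<le> (L\<phi> * M\<psi> + M\<phi> * L\<psi>) * dist u v"
    by (intro order_trans[OF abs_triangle_ineq]) (simp add: algebra_simps)
  have den: "m\<^sup>2 \<le> \<psi> u * \<psi> v"
    using bound\<psi>[OF uv(1)] bound\<psi>[OF uv(2)] m by (simp add: power2_eq_square mult_mono)
  have "\<phi> u / \<psi> u - \<phi> v / \<psi> v = ((\<phi> u - \<phi> v) * \<psi> v + \<phi> v * (\<psi> v - \<psi> u)) / (\<psi> u * \<psi> v)"
    using pos by (simp add: field_simps)
  then have "dist (\<phi> u / \<psi> u) (\<phi> v / \<psi> v)
      = \<bar>(\<phi> u - \<phi> v) * \<psi> v + \<phi> v * (\<psi> v - \<psi> u)\<bar> / (\<psi> u * \<psi> v)"
    using pos by (simp add: dist_real_def abs_divide abs_mult)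
  also have "\<dots> \<le> (L\<phi> * M\<psi> + M\<phi> * L\<psi>) * dist u v / m\<^sup>2"
    using num den m by (intro frac_le) auto
  finally show "dist (\<phi> u / \<psi> u) (\<phi> v / \<psi> v) \<le> (L\<phi> * M\<psi> + M\<phi> * L\<psi>) / m\<^sup>2 * dist u v"
    by simp
next
  show "0 \<le> (L\<phi> * M\<psi> + M\<phi> * L\<psi>) / m\<^sup>2"
    using lipschitz_on_nonneg[OF lip\<phi>] lipschitz_on_nonneg[OF lip\<psi>] M by simp
qed

section \<open>Subgradients of the merit function\<close>

lemma frechet_subdiff_subset_limiting: "frechet_subdiff \<phi> x \<subseteq> limiting_subdiff \<phi> x"
proof
  fix v assume v: "v \<in> frechet_subdiff \<phi> x"
  then have "\<bar>\<phi> x\<bar> \<noteq> \<infinity>" unfolding frechet_subdiff_def by (auto split: if_splits)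
  moreover have "\<exists>xs vs. xs \<longlonglongrightarrow> x \<and> (\<lambda>k. \<phi> (xs k)) \<longlonglongrightarrow> \<phi> x \<and>
      (\<forall>k. vs k \<in> frechet_subdiff \<phi> (xs k)) \<and> vs \<longlonglongrightarrow> v"
    using v by (intro exI[of _ "\<lambda>_. x"] exI[of _ "\<lambda>_. v"]) simp
  ultimately show "v \<in> limiting_subdiff \<phi> x" unfolding limiting_subdiff_def by simp
qed

lemma frechet_subdiff_smooth_minorant:
  fixes \<phi> :: "'a::real_inner \<Rightarrow> ereal" and Q :: "'a \<Rightarrow> real"
  assumes Q: "(Q has_derivative (\<lambda>h. inner v h)) (at p)" and touch: "\<phi> p = ereal (Q p)"
    and minor: "\<And>e. e > 0 \<Longrightarrow> \<exists>d>0. \<forall>y. norm (y - p) < d \<longrightarrow>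
                   ereal (Q y + inner w (y - p) - e * norm (y - p)) \<le> \<phi> y"
  shows "v + w \<in> frechet_subdiff \<phi> p"
proof -
  have "\<exists>d>0. \<forall>y. norm (y - p) < d \<longrightarrow>
          ereal (Q p + inner (v + w) (y - p) - e * norm (y - p)) \<le> \<phi> y" if e: "e > 0" for e
  proof -
    obtain d1 where d1: "d1 > 0"
      and lin: "\<And>y. norm (y - p) < d1 \<Longrightarrow> norm (Q y - Q p - inner v (y - p)) \<le> e / 2 * norm (y - p)"
      using Q e unfolding has_derivative_at_alt by (meson half_gt_zero)
    obtain d2 where d2: "d2 > 0"
      and low: "\<And>y. norm (y - p) < d2 \<Longrightarrow> ereal (Q y + inner w (y - p) - e / 2 * norm (y - p)) \<le> \<phi> y"
      using minor[of "e / 2"] e by auto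
    have "ereal (Q p + inner (v + w) (y - p) - e * norm (y - p)) \<le> \<phi> y"
      if "norm (y - p) < min d1 d2" for y
    proof -
      have "\<bar>Q y - Q p - inner v (y - p)\<bar> \<le> e / 2 * norm (y - p)" using lin[of y] that by simp
      then have "Q p + inner (v + w) (y - p) - e * norm (y - p) \<le> Q y + inner w (y - p) - e / 2 * norm (y - p)"
        unfolding inner_add_left by linarith
      then show ?thesis using low[of y] that by (meson ereal_less_eq(3) min_less_iff_conj order_trans)
    qed
    then show ?thesis using d1 d2 by (intro exI[of _ "min d1 d2"]) auto
  qed
  then show ?thesis unfolding frechet_subdiff_def touch by simp
qed

text \<open>Near \<open>(xh, z, ch)\<close> the merit function dominates the smooth function obtained by freezing
  \<open>f\<close> at \<open>xh\<close> and \<open>h\<^sub>2\<^sup>\<star>\<close> at its Fenchel--Young lower bound from \<open>x\<close>; the remaining term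
  \<open>2c'(f x' - f xh)\<close> is \<open>2ch(f x' - f xh) + o(norm (y - p))\<close> by continuity of \<open>f\<close>.\<close>

lemma Hfun_local_minorant:
  fixes f g h1 h2 :: "'a::real_inner \<Rightarrow> real"
  assumes fcont: "isCont f xh" and e: "0 < e"
    and w: "\<And>u. u \<in> C \<Longrightarrow> inner w (u - xh) \<le> 2 * ch * (f u - f xh)"
  obtains d where "0 < d"
    and "\<And>x' z' c'. norm ((x', z', c') - (xh, z, ch)) < d \<Longrightarrow>
           ereal (2*c'*f xh - c'\<^sup>2 * g x' + h1 x' - inner x' z' + (inner x z' - h2 x)
                  + inner w (x' - xh) - e * norm ((x', z', c') - (xh, z, ch)))
           \<le> Hfun f g h1 h2 C (x', z', c')"
proof -
  obtain d where d: "d > 0" and fd: "\<And>x'. dist x' xh < d \<Longrightarrow> dist (f x') (f xh) < e / 2"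
    using fcont e unfolding continuous_at_eps_delta by (meson half_gt_zero)
  have "ereal (2*c'*f xh - c'\<^sup>2 * g x' + h1 x' - inner x' z' + (inner x z' - h2 x)
                  + inner w (x' - xh) - e * norm ((x', z', c') - (xh, z, ch)))
           \<le> Hfun f g h1 h2 C (x', z', c')"
    if y: "norm ((x', z', c') - (xh, z, ch)) < d" for x' z' c'
  proof (cases "x' \<in> C")
    case False
    then show ?thesis by (simp add: Hfun_eq_infinity)
  next
    case True
    define N where "N = norm ((x', z', c') - (xh, z, ch))"
    have "norm (x' - xh) \<le> N" unfolding N_def by (simp add: norm_fst_le)
    then have "\<bar>f x' - f xh\<bar> \<le> e / 2" using fd[of x'] y unfolding N_def by (simp add: dist_norm)
    moreover have "\<bar>c' - ch\<bar> \<le> N"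
      using order_trans[OF norm_snd_le norm_snd_le, of "c' - ch" "x' - xh" "z' - z"]
      unfolding N_def by simp
    ultimately have "2 * \<bar>c' - ch\<bar> * \<bar>f x' - f xh\<bar> \<le> 2 * N * (e / 2)"
      by (intro mult_mono) auto
    then have "\<bar>2 * (c' - ch) * (f x' - f xh)\<bar> \<le> e * N"
      by (simp only: abs_mult abs_numeral) (simp add: algebra_simps)
    moreover have "2 * c' * f x' = 2 * c' * f xh + 2 * ch * (f x' - f xh) + 2 * (c' - ch) * (f x' - f xh)"
      by (simp add: algebra_simps)
    ultimately have "2*c'*f xh - c'\<^sup>2 * g x' + h1 x' - inner x' z' + (inner x z' - h2 x)
          + inner w (x' - xh) - e * N
        \<le> 2*c'*f x' - c'\<^sup>2 * g x' + h1 x' - inner x' z' + (inner x z' - h2 x)"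
      using w[OF True] by (simp add: abs_le_iff)
    then show ?thesis unfolding N_def using Hfun_ge[OF True] order_trans ereal_less_eq(3) by blast
  qed
  then show ?thesis using that d by blast
qed

lemma Hfun_frechet_subgradient:
  fixes f g h1 h2 :: "'a::euclidean_space \<Rightarrow> real" and dg dh1 :: "'a \<Rightarrow> 'a"
  assumes fcont: "isCont f xh"
    and g_diff: "\<And>u. (g has_derivative (\<lambda>v. inner (dg u) v)) (at u)"
    and h1_diff: "\<And>u. (h1 has_derivative (\<lambda>v. inner (dh1 u) v)) (at u)"
    and xhC: "xh \<in> C" and ch: "ch * g xh = f xh" and zs: "z \<in> cvx_subdiff h2 x"
    and w: "\<And>u. u \<in> C \<Longrightarrow> inner w (u - xh) \<le> 2 * ch * (f u - f xh)"
  shows "(w + dh1 xh - ch\<^sup>2 *\<^sub>R dg xh - z, x - xh, 0)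
           \<in> frechet_subdiff (Hfun f g h1 h2 C) (xh, z, ch)"
proof -
  define p where "p = (xh, z, ch)"
  define Q where "Q q = 2 * snd (snd q) * f xh - (snd (snd q))\<^sup>2 * g (fst q) + h1 (fst q)
        - inner (fst q) (fst (snd q)) + (inner x (fst (snd q)) - h2 x)" for q :: "'a \<times> 'a \<times> real"
  have fst_der: "((\<lambda>q. \<phi> (fst q)) has_derivative (\<lambda>h. inner (D (fst q)) (fst h))) (at q)"
    if "\<And>u. (\<phi> has_derivative (\<lambda>v. inner (D u) v)) (at u)" for \<phi> D and q :: "'a \<times> 'a \<times> real"
  proof -
    have "(fst has_derivative fst) (at q)" by (rule bounded_linear_imp_has_derivative[OF bounded_linear_fst])
    from has_derivative_compose[OF this that] show ?thesis by simp
  qed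
  have "(Q has_derivative (\<lambda>q. inner (dh1 xh - ch\<^sup>2 *\<^sub>R dg xh - z, x - xh, 0) q)) (at p)"
    unfolding Q_def p_def
    apply (rule has_derivative_eq_rhs)
     apply (rule derivative_eq_intros fst_der[OF g_diff] fst_der[OF h1_diff] refl)+
    by (auto simp: inner_diff_left inner_diff_right algebra_simps inner_commute ch[symmetric])
  moreover have "Hfun f g h1 h2 C p = ereal (Q p)"
    unfolding p_def Q_def by (simp add: Hfun_eq_if_cvx_subdiff[OF xhC zs])
  moreover have "\<exists>d>0. \<forall>y. norm (y - p) < d \<longrightarrow>
      ereal (Q y + inner (w, 0, 0) (y - p) - e * norm (y - p)) \<le> Hfun f g h1 h2 C y"
    if "e > 0" for e
  proof -
    obtain d where "0 < d" and minor: "\<And>x' z' c'. norm ((x', z', c') - p) < d \<Longrightarrow>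
        ereal (2*c'*f xh - c'\<^sup>2 * g x' + h1 x' - inner x' z' + (inner x z' - h2 x)
               + inner w (x' - xh) - e * norm ((x', z', c') - p)) \<le> Hfun f g h1 h2 C (x', z', c')"
      using Hfun_local_minorant[OF fcont \<open>e > 0\<close> w] unfolding p_def by metis
    have "ereal (Q y + inner (w, 0, 0) (y - p) - e * norm (y - p)) \<le> Hfun f g h1 h2 C y"
      if "norm (y - p) < d" for y
    proof -
      obtain x' z' c' where y: "y = (x', z', c')" by (cases y)
      show ?thesis using minor[of x' z' c'] that unfolding Q_def p_def y by (simp add: algebra_simps)
    qed
    then show ?thesis using \<open>0 < d\<close> by blast
  qed
  ultimately have "(dh1 xh - ch\<^sup>2 *\<^sub>R dg xh - z, x - xh, 0) + (w, 0, 0)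
      \<in> frechet_subdiff (Hfun f g h1 h2 C) p"
    by (rule frechet_subdiff_smooth_minorant)
  then show ?thesis unfolding p_def by (simp add: algebra_simps)
qed

lemma trial_set_variational_ineq:
  fixes f :: "'a::real_inner \<Rightarrow> real"
  assumes xh: "xh \<in> trial_set f g C dg dh1 ck x z \<alpha>" and xC: "x \<in> C"
  shows "xh \<in> C"
    and "\<And>u. u \<in> C \<Longrightarrow> inner (x - \<alpha> *\<^sub>R (dh1 x - ck\<^sup>2 *\<^sub>R dg x - z) - xh) (u - xh)
                          - (norm (u - xh))\<^sup>2 / 2 \<le> 2 * \<alpha> * ck * (f u - f xh)"
proof -
  define y where "y = x - \<alpha> *\<^sub>R (dh1 x - ck\<^sup>2 *\<^sub>R dg x - z)"
  have prox: "ereal (2*\<alpha>*ck*f xh) + ind C xh + ereal ((norm (xh - y))\<^sup>2 / 2)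
      \<le> ereal (2*\<alpha>*ck*f u) + ind C u + ereal ((norm (u - y))\<^sup>2 / 2)" for u
    using xh unfolding trial_set_def prox_def y_def by auto
  show xhC: "xh \<in> C" using prox[of x] xC by (auto simp: ind_def split: if_splits)
  fix u assume "u \<in> C"
  then have "2*\<alpha>*ck*f xh + (norm (xh - y))\<^sup>2 / 2 \<le> 2*\<alpha>*ck*f u + (norm (u - y))\<^sup>2 / 2"
    using prox[of u] xhC by (simp add: ind_def)
  moreover have "(norm (u - y))\<^sup>2 = (norm (u - xh))\<^sup>2 - 2 * inner (y - xh) (u - xh) + (norm (xh - y))\<^sup>2"
    unfolding power2_norm_eq_inner by (simp add: inner_diff_left inner_diff_right inner_commute)
  ultimately show "inner (y - xh) (u - xh) - (norm (u - xh))\<^sup>2 / 2 \<le> 2 * \<alpha> * ck * (f u - f xh)"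
    unfolding right_diff_distrib by linarith
qed

lemma trial_set_descent:
  fixes f :: "'a::real_inner \<Rightarrow> real"
  assumes xh: "xh \<in> trial_set f g C dg dh1 ck x z \<alpha>" and xC: "x \<in> C"
  shows "(norm (xh - x))\<^sup>2 / 2 + \<alpha> * inner (dh1 x - ck\<^sup>2 *\<^sub>R dg x - z) (xh - x)
           \<le> 2 * \<alpha> * ck * (f x - f xh)"
proof -
  define G where "G = dh1 x - ck\<^sup>2 *\<^sub>R dg x - z"
  have "x - \<alpha> *\<^sub>R G - xh = (x - xh) - \<alpha> *\<^sub>R G" by simp
  then have "inner (x - \<alpha> *\<^sub>R G - xh) (x - xh) = (norm (xh - x))\<^sup>2 + \<alpha> * inner G (xh - x)"
    unfolding norm_minus_commute[of xh x] power2_norm_eq_inner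
    by (simp add: inner_diff_left inner_diff_right right_diff_distrib)
  then show ?thesis
    using trial_set_variational_ineq(2)[OF xh xC xC] unfolding G_def by (simp add: norm_minus_commute)
qed

text \<open>Otherwise \<open>norm (xh - x)\<^sup>2 \<le> 4 \<alpha> ck f x + 2 \<alpha> norm G norm (xh - x)\<close>, the descent
  inequality of the prox step with \<open>G = dh1 x - ck\<^sup>2 dg x - z\<close>, would contradict both smallness hypotheses.\<close>

lemma trial_step_le:
  fixes f :: "'a::real_inner \<Rightarrow> real"
  assumes xh: "xh \<in> trial_set f g C dg dh1 ck x z \<alpha>" and xC: "x \<in> C"
    and f_nonneg: "\<And>u. 0 \<le> f u" and ck: "0 \<le> ck" and \<alpha>: "0 < \<alpha>"
    and small_f: "8 * \<alpha> * ck * f x \<le> \<delta>\<^sup>2"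
    and small_G: "4 * \<alpha> * norm (dh1 x - ck\<^sup>2 *\<^sub>R dg x - z) \<le> \<delta>"
  shows "norm (xh - x) \<le> \<delta>"
proof (rule ccontr)
  assume "\<not> norm (xh - x) \<le> \<delta>"
  then have far: "\<delta> < norm (xh - x)" by simp
  define G where "G = dh1 x - ck\<^sup>2 *\<^sub>R dg x - z"
  define d where "d = norm (xh - x)"
  have "d\<^sup>2 / 2 + \<alpha> * inner G (xh - x) \<le> 2 * \<alpha> * ck * (f x - f xh)"
    using trial_set_descent[OF xh xC] unfolding G_def d_def .
  moreover have "- (\<alpha> * inner G (xh - x)) \<le> \<alpha> * (norm G * d)"
    using mult_left_mono[of "- inner G (xh - x)" "norm G * d" \<alpha>] \<alpha> Cauchy_Schwarz_ineq2[of G "xh - x"]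
    unfolding d_def by (simp add: abs_le_iff)
  moreover have "0 \<le> 2 * \<alpha> * ck * f xh" using \<alpha> ck f_nonneg by simp
  ultimately have "d\<^sup>2 \<le> 4 * \<alpha> * ck * f x + 2 * (\<alpha> * norm G) * d"
    by (simp add: algebra_simps)
  also have "\<dots> \<le> \<delta>\<^sup>2 / 2 + \<delta> / 2 * d"
    using small_f small_G unfolding G_def d_def by (intro add_mono mult_right_mono) auto
  also have "\<dots> < d\<^sup>2 / 2 + d / 2 * d"
  proof -
    have "0 \<le> 4 * \<alpha> * norm G" using \<alpha> by simp
    then have "0 \<le> \<delta>" using small_G unfolding G_def by linarith
    then show ?thesis using far unfolding d_def
      by (intro add_less_le_mono mult_right_mono) (auto intro: power_strict_mono)
  qed
  finally show False by (simp add: power2_eq_square)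
qed

text \<open>Sufficient decrease \<open>H(xh, z, ch) + \<sigma>/2 norm (xh - x)\<^sup>2 \<le> F x\<close> holds once the quadratic
  error terms of the linearisations are dominated by the proximal term \<open>norm (xh - x)\<^sup>2/(2\<alpha>)\<close>;
  the ratio enters through the identity \<open>2 ch f - ch\<^sup>2 g = 2 ck f - ck\<^sup>2 g + g (ch - ck)\<^sup>2\<close> at \<open>xh\<close>.\<close>

lemma trial_point_accepted:
  fixes f g h1 h2 :: "'a::real_inner \<Rightarrow> real"
  assumes xh: "xh \<in> trial_set f g C dg dh1 ck x z \<alpha>" and xC: "x \<in> C" and gx: "g x \<noteq> 0"
    and ck: "ck = f x / g x" and zs: "z \<in> cvx_subdiff h2 x" and \<alpha>: "0 < \<alpha>"
    and gxh: "0 < g xh" "g xh \<le> Mg"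
    and g_lower: "g x + inner (dg x) (xh - x) - Lg * (norm (xh - x))\<^sup>2 \<le> g xh"
    and h1_upper: "h1 xh \<le> h1 x + inner (dh1 x) (xh - x) + Lh * (norm (xh - x))\<^sup>2"
    and ratio: "\<bar>f xh / g xh - ck\<bar> \<le> Lc * norm (xh - x)"
    and step: "\<alpha> * (2 * (Mg * Lc\<^sup>2 + ck\<^sup>2 * Lg + Lh) + \<sigma>) \<le> 1"
  shows "accept f g h1 h2 C \<sigma> x z xh"
proof -
  define d where "d = norm (xh - x)"
  define ch where "ch = f xh / g xh"
  have xhC: "xh \<in> C" by (rule trial_set_variational_ineq(1)[OF xh xC])
  have descent: "2 * ck * f xh + inner (dh1 x - ck\<^sup>2 *\<^sub>R dg x - z) (xh - x) \<le> 2 * ck * f x - d\<^sup>2 / (2 * \<alpha>)"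
    using trial_set_descent[OF xh xC] \<alpha> unfolding d_def by (simp add: field_simps)
  have "2 * ch * f xh - ch\<^sup>2 * g xh = 2 * ck * f xh - ck\<^sup>2 * g xh + g xh * (ch - ck)\<^sup>2"
    unfolding ch_def using gxh by (simp add: power2_eq_square field_simps)
  moreover have "g xh * (ch - ck)\<^sup>2 \<le> Mg * (Lc * d)\<^sup>2"
  proof -
    have "\<bar>ch - ck\<bar>\<^sup>2 \<le> (Lc * d)\<^sup>2" using ratio unfolding ch_def d_def by (intro power_mono) auto
    then show ?thesis using gxh by (intro mult_mono) auto
  qed
  moreover have "ck\<^sup>2 * (g x + inner (dg x) (xh - x) - Lg * d\<^sup>2) \<le> ck\<^sup>2 * g xh"
    using g_lower unfolding d_def by (simp add: mult_left_mono)
  moreover have "(Mg * Lc\<^sup>2 + ck\<^sup>2 * Lg + Lh + \<sigma> / 2) * d\<^sup>2 \<le> d\<^sup>2 / (2 * \<alpha>)"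
  proof -
    have "Mg * Lc\<^sup>2 + ck\<^sup>2 * Lg + Lh + \<sigma> / 2 \<le> 1 / (2 * \<alpha>)" using step \<alpha> by (simp add: field_simps)
    from mult_right_mono[OF this, of "d\<^sup>2"] show ?thesis by simp
  qed
  moreover have "(f x)\<^sup>2 / g x = 2 * ck * f x - ck\<^sup>2 * g x"
    unfolding ck using gx by (simp add: power2_eq_square field_simps)
  moreover have "inner (dh1 x - ck\<^sup>2 *\<^sub>R dg x - z) (xh - x)
      = inner (dh1 x) (xh - x) - ck\<^sup>2 * inner (dg x) (xh - x) - (inner xh z - inner x z)"
    by (simp add: inner_diff_left inner_diff_right inner_commute)
  ultimately have "2*ch*f xh - ch\<^sup>2 * g xh + h1 xh - inner xh z + (inner x z - h2 x) + \<sigma> / 2 * d\<^sup>2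
      \<le> (f x)\<^sup>2 / g x + h1 x - h2 x"
    using descent h1_upper unfolding d_def by (simp add: algebra_simps power_mult_distrib)
  then show ?thesis
    unfolding accept_def Hfun_eq_if_cvx_subdiff[OF xhC zs] ch_def[symmetric] Fobj_def
    using xC gx gxh d_def by simp
qed

text \<open>The optimality condition of the proximal step, \<open>(x - xh)/\<alpha> - G \<in> 2 ck \<partial>f(xh) + N\<^sub>C(xh)\<close>
  with \<open>G = dh1 x - ck\<^sup>2 dg x - z\<close>, becomes a subgradient of \<open>H\<close> at \<open>(xh, z, ch)\<close> after trading
  \<open>ck\<close> for \<open>ch\<close>.\<close>

lemma trial_point_limiting_subgradient:
  fixes f g h1 h2 :: "'a::euclidean_space \<Rightarrow> real" and dg dh1 :: "'a \<Rightarrow> 'a"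
  assumes f_convex: "convex_on UNIV f" and fcont: "isCont f xh"
    and g_diff: "\<And>u. (g has_derivative (\<lambda>v. inner (dg u) v)) (at u)"
    and h1_diff: "\<And>u. (h1 has_derivative (\<lambda>v. inner (dh1 u) v)) (at u)"
    and C: "convex C" and xC: "x \<in> C" and xh: "xh \<in> trial_set f g C dg dh1 ck x z \<alpha>"
    and \<alpha>: "0 < \<alpha>" and ck: "0 \<le> ck" and ch: "0 \<le> ch" "ch * g xh = f xh"
    and zs: "z \<in> cvx_subdiff h2 x"
  shows "\<exists>s \<in> cvx_subdiff f xh.
           ((1 / \<alpha>) *\<^sub>R (x - xh) + (dh1 xh - dh1 x) + ck\<^sup>2 *\<^sub>R (dg x - dg xh)
              + (ck\<^sup>2 - ch\<^sup>2) *\<^sub>R dg xh + (2 * (ch - ck)) *\<^sub>R s, x - xh, 0)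
           \<in> limiting_subdiff (Hfun f g h1 h2 C) (xh, z, ch)"
proof -
  define w where "w = x - \<alpha> *\<^sub>R (dh1 x - ck\<^sup>2 *\<^sub>R dg x - z) - xh"
  have xhC: "xh \<in> C" by (rule trial_set_variational_ineq(1)[OF xh xC])
  have "inner w (u - xh) - 1/2 * (norm (u - xh))\<^sup>2 \<le> 2 * \<alpha> * ck * (f u - f xh)" if "u \<in> C" for u
    using trial_set_variational_ineq(2)[OF xh xC that] unfolding w_def by simp
  then obtain s where s: "s \<in> cvx_subdiff f xh"
    and normal: "\<And>u. u \<in> C \<Longrightarrow> inner (w - (2 * \<alpha> * ck) *\<^sub>R s) (u - xh) \<le> 0"
    using prox_optimality_cvx_subdiff[OF f_convex C xhC, of "2 * \<alpha> * ck" "1/2" w] \<alpha> ck by auto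
  define w1 where "w1 = (1 / \<alpha>) *\<^sub>R w + (2 * (ch - ck)) *\<^sub>R s"
  have "inner w1 (u - xh) \<le> 2 * ch * (f u - f xh)" if "u \<in> C" for u
  proof -
    have "f xh + inner s (u - xh) \<le> f u" using s unfolding cvx_subdiff_def by blast
    then have "2 * ch * inner s (u - xh) \<le> 2 * ch * (f u - f xh)" using ch by (simp add: mult_left_mono)
    moreover have "(1 / \<alpha>) * inner (w - (2 * \<alpha> * ck) *\<^sub>R s) (u - xh) \<le> 0"
      using normal[OF that] \<alpha> by (simp add: divide_nonpos_pos)
    moreover have "inner w1 (u - xh)
        = (1 / \<alpha>) * inner (w - (2 * \<alpha> * ck) *\<^sub>R s) (u - xh) + 2 * ch * inner s (u - xh)"
      unfolding w1_def using \<alpha> by (simp add: inner_add_left inner_diff_left algebra_simps)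
    ultimately show ?thesis by linarith
  qed
  from Hfun_frechet_subgradient[OF fcont g_diff h1_diff xhC ch(2) zs this]
  have "(w1 + dh1 xh - ch\<^sup>2 *\<^sub>R dg xh - z, x - xh, 0) \<in> limiting_subdiff (Hfun f g h1 h2 C) (xh, z, ch)"
    using frechet_subdiff_subset_limiting by blast
  moreover have "w1 + dh1 xh - ch\<^sup>2 *\<^sub>R dg xh - z = (1 / \<alpha>) *\<^sub>R (x - xh) + (dh1 xh - dh1 x)
      + ck\<^sup>2 *\<^sub>R (dg x - dg xh) + (ck\<^sup>2 - ch\<^sup>2) *\<^sub>R dg xh + (2 * (ch - ck)) *\<^sub>R s"
    unfolding w1_def w_def using \<alpha> by (simp add: algebra_simps scaleR_diff_right)
  ultimately show ?thesis using s by auto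
qed

locale algorithm1 =
  fixes f g h1 h2 :: "'a::euclidean_space \<Rightarrow> real"
    and dg dh1 :: "'a \<Rightarrow> 'a"
    and C :: "'a set"
    and x z :: "nat \<Rightarrow> 'a" and c atil :: "nat \<Rightarrow> real"
    and alo \<sigma> r :: real
  assumes f_nonneg: "\<And>u. f u \<ge> 0"
    and g_nonneg: "\<And>u. g u \<ge> 0"
    and C_convex: "convex C"
    and f_convex: "convex_on UNIV f"
    and g_diff: "\<And>u. (g has_derivative (\<lambda>v. inner (dg u) v)) (at u)"
    and dg_loclip: "\<And>u. \<exists>U L. open U \<and> u \<in> U \<and> L-lipschitz_on U dg"
    and h1_diff: "\<And>u. (h1 has_derivative (\<lambda>v. inner (dh1 u) v)) (at u)"
    and dh1_loclip: "\<And>u. \<exists>U L. open U \<and> u \<in> U \<and> L-lipschitz_on U dh1"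
    and h2_convex: "convex_on UNIV h2"
    and params: "0 < alo" "0 < \<sigma>" "0 < r" "r < 1"
    and x0_dom: "Fobj f g h1 h2 C (x 0) < \<infinity>"
    and X0_compact: "compact {u. Fobj f g h1 h2 C u < \<infinity> \<and> Fobj f g h1 h2 C u \<le> Fobj f g h1 h2 C (x 0)}"
    and c_def: "\<And>k. c k = f (x k) / g (x k)"
    and z_sub: "\<And>k. z k \<in> cvx_subdiff h2 (x k)"
    and atil_range: "\<And>k. alo \<le> atil k"
    and iter: "\<And>k. alg_step f g h1 h2 C dg dh1 \<sigma> r (x k) (c k) (z k) (atil k) (x (Suc k))"
begin

abbreviation F where "F \<equiv> Fobj f g h1 h2 C"
abbreviation H where "H \<equiv> Hfun f g h1 h2 C"

definition X0 where "X0 = {u. F u < \<infinity> \<and> F u \<le> F (x 0)}"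

lemma iterate_accepted: "accept f g h1 h2 C \<sigma> (x k) (z k) (x (Suc k))"
proof -
  from iter[of k] obtain j xh where "accept f g h1 h2 C \<sigma> (x k) (z k) (xh j)" "x (Suc k) = xh j"
    unfolding alg_step_def by blast
  then show ?thesis by simp
qed

lemma F_le_H: "F (x (Suc k)) \<le> H (x (Suc k), z k, c (Suc k))"
  using Fobj_le_Hfun[of g "x (Suc k)"] iterate_accepted[of k] c_def unfolding accept_def by simp

lemma H_sufficient_decrease:
  "H (x (Suc k), z k, c (Suc k)) + ereal (\<sigma> / 2 * (norm (x (Suc k) - x k))\<^sup>2) \<le> F (x k)"
  using iterate_accepted[of k] c_def unfolding accept_def by simp

lemma H_descent:
  assumes "1 \<le> k"
  shows "H (x (k + 1), z k, c (k + 1)) + ereal (\<sigma> / 2 * (norm (x (k + 1) - x k))\<^sup>2)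
           \<le> H (x k, z (k - 1), c k)"
proof -
  obtain j where k: "k = Suc j" using assms by (cases k) auto
  show ?thesis
    using order_trans[OF H_sufficient_decrease[of "Suc j"] F_le_H[of j]] unfolding k by simp
qed

lemma F_decreasing: "F (x (Suc k)) \<le> F (x k)"
proof -
  have "F (x (Suc k)) \<le> H (x (Suc k), z k, c (Suc k)) + ereal (\<sigma> / 2 * (norm (x (Suc k) - x k))\<^sup>2)"
    using F_le_H[of k] params(2) by (simp add: add_increasing2)
  then show ?thesis using H_sufficient_decrease[of k] by simp
qed

lemma iterates_in_X0: "x k \<in> X0"
  using lift_Suc_antimono_le[of "\<lambda>k. F (x k)", OF F_decreasing, of 0 k] x0_dom
  unfolding X0_def by auto

lemma X0_feasible:
  assumes "u \<in> X0"
  shows "u \<in> C" and "0 < g u"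
  using assms g_nonneg[of u] unfolding X0_def Fobj_less_infinity_iff by auto

lemma compact_X0_nbhd: "compact (\<Union>u\<in>X0. cball u \<epsilon>)"
  using compact_minkowski_sum_cball X0_compact unfolding X0_def by blast

lemma g_continuous: "continuous_on UNIV g"
  using g_diff by (intro has_derivative_continuous_on) blast

lemma data_lipschitz_on_compact:
  assumes S: "compact S"
  obtains L where "L-lipschitz_on S f" "L-lipschitz_on S h2" "L-lipschitz_on S g"
    "L-lipschitz_on S dg" "L-lipschitz_on S dh1"
proof -
  obtain L1 L2 L3 L4 L5 where "L1-lipschitz_on S f" "L2-lipschitz_on S h2" "L3-lipschitz_on S g"
    "L4-lipschitz_on S dg" "L5-lipschitz_on S dh1"
    using locally_lipschitz_imp_lipschitz_on_compact[OF _ S, of f]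
      locally_lipschitz_imp_lipschitz_on_compact[OF _ S, of h2]
      locally_lipschitz_imp_lipschitz_on_compact[OF _ S, of g]
      locally_lipschitz_imp_lipschitz_on_compact[OF dg_loclip S]
      locally_lipschitz_imp_lipschitz_on_compact[OF dh1_loclip S]
      convex_on_locally_lipschitz[OF f_convex] convex_on_locally_lipschitz[OF h2_convex]
      has_gradient_locally_lipschitz[OF g_diff locally_lipschitz_continuous_on[OF dg_loclip]]
    by metis
  then show ?thesis
    using that[of "Max {L1, L2, L3, L4, L5}"] by (simp add: lipschitz_on_le)
qed

lemma data_bounded_on_compact:
  assumes S: "compact S"
  obtains M where "\<And>u. u \<in> S \<Longrightarrow> \<bar>f u\<bar> \<le> M \<and> \<bar>g u\<bar> \<le> M \<and> norm (dg u) \<le> M \<and> norm (dh1 u) \<le> M"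
proof -
  have "continuous_on S (\<lambda>u. (f u, g u, dg u, dh1 u))"
    using convex_on_continuous[OF open_UNIV f_convex] g_continuous
      locally_lipschitz_continuous_on[OF dg_loclip] locally_lipschitz_continuous_on[OF dh1_loclip]
    by (intro continuous_intros) (auto intro: continuous_on_subset)
  then obtain M where "\<And>u. u \<in> S \<Longrightarrow> norm (f u, g u, dg u, dh1 u) \<le> M"
    using continuous_on_compact_bound[OF S] by blast
  then show ?thesis
    using that norm_fst_le norm_snd_le order_trans by (smt (verit) real_norm_def)
qed

lemma g_bounded_below_near_X0:
  obtains m \<delta> where "0 < m" "0 < \<delta>" "\<delta> \<le> 1"
    and "\<And>u v. u \<in> X0 \<Longrightarrow> norm (v - u) \<le> \<delta> \<Longrightarrow> m \<le> g v"
proof -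
  define K1 where "K1 = (\<Union>u\<in>X0. cball u 1)"
  have "compact K1" unfolding K1_def by (rule compact_X0_nbhd)
  then obtain Lg where Lg: "Lg-lipschitz_on K1 g" using data_lipschitz_on_compact by metis
  have "compact X0" using X0_compact unfolding X0_def .
  moreover have "X0 \<noteq> {}" using iterates_in_X0 by blast
  moreover have "continuous_on X0 g" using g_continuous continuous_on_subset by blast
  ultimately obtain xm where xm: "xm \<in> X0" and min: "\<And>u. u \<in> X0 \<Longrightarrow> g xm \<le> g u"
    using continuous_attains_inf by metis
  define m where "m = g xm / 2"
  define \<delta> where "\<delta> = min 1 (m / (Lg + 1))"
  have m: "0 < m" unfolding m_def using X0_feasible(2)[OF xm] by simp
  have Lg0: "0 \<le> Lg" using lipschitz_on_nonneg[OF Lg] .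
  have Lg\<delta>: "Lg * \<delta> \<le> m"
  proof -
    have "Lg * \<delta> \<le> (Lg + 1) * (m / (Lg + 1))" unfolding \<delta>_def using Lg0 m by (intro mult_mono) auto
    then show ?thesis using Lg0 by simp
  qed
  have "m \<le> g v" if "u \<in> X0" "norm (v - u) \<le> \<delta>" for u v
  proof -
    have "u \<in> K1" "v \<in> K1" using that unfolding K1_def \<delta>_def by (auto simp: dist_norm norm_minus_commute intro!: bexI[of _ u])
    then have "\<bar>g u - g v\<bar> \<le> Lg * norm (v - u)"
      using lipschitz_onD[OF Lg] by (simp add: dist_real_def dist_norm norm_minus_commute)
    also have "\<dots> \<le> Lg * \<delta>" using that Lg0 by (intro mult_left_mono)
    finally show ?thesis using Lg\<delta> min[OF that(1)] unfolding m_def by simp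
  qed
  moreover have "0 < \<delta>" "\<delta> \<le> 1" unfolding \<delta>_def using m Lg0 by auto
  ultimately show ?thesis using that[OF m] by blast
qed

end

text \<open>The iterates stay in the compact set \<open>X0\<close>, where \<open>g\<close> is positive, so the data admit uniform
  bounds and Lipschitz constants on a neighbourhood \<open>K\<close> of the iterates.\<close>

locale algorithm1_estimates = algorithm1 +
  fixes K :: "'a set" and \<delta> m M L Lc :: real
  assumes delta_pos: "0 < \<delta>" and m_pos: "0 < m"
    and near_iterates_in_K: "\<And>k v. norm (v - x k) \<le> \<delta> \<Longrightarrow> v \<in> K"
    and bounds_on_K: "\<And>u. u \<in> K \<Longrightarrow>
          m \<le> g u \<and> g u \<le> M \<and> f u \<le> M \<and> norm (dg u) \<le> M \<and> norm (dh1 u) \<le> M"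
    and dg_lipschitz: "L-lipschitz_on K dg" and dh1_lipschitz: "L-lipschitz_on K dh1"
    and ratio_lipschitz: "Lc-lipschitz_on K (\<lambda>u. f u / g u)"
    and f_subgrad_bound: "\<And>k s. s \<in> cvx_subdiff f (x k) \<Longrightarrow> norm s \<le> L"
    and z_bound: "\<And>k. norm (z k) \<le> L"

lemma (in algorithm1) uniform_estimates:
  obtains K \<delta> m M L Lc where "algorithm1_estimates f g h1 h2 dg dh1 C x z c atil alo \<sigma> r K \<delta> m M L Lc"
proof -
  obtain m \<delta> where m: "0 < m" and \<delta>: "0 < \<delta>" "\<delta> \<le> 1"
    and g_lower: "\<And>u v. u \<in> X0 \<Longrightarrow> norm (v - u) \<le> \<delta> \<Longrightarrow> m \<le> g v"
    using g_bounded_below_near_X0 by blast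
  define K1 where "K1 = (\<Union>u\<in>X0. cball u 1)"
  define K where "K = (\<Union>u\<in>X0. cball u \<delta>)"
  have K1: "compact K1" unfolding K1_def by (rule compact_X0_nbhd)
  have KK1: "K \<subseteq> K1" unfolding K_def K1_def using \<delta> by auto
  have ball_K1: "ball (x k) 1 \<subseteq> K1" for k
    unfolding K1_def using iterates_in_X0 by (auto intro!: bexI[of _ "x k"])
  obtain L where Lf: "L-lipschitz_on K1 f" and Lh2: "L-lipschitz_on K1 h2" and Lg: "L-lipschitz_on K1 g"
    and Ldg: "L-lipschitz_on K1 dg" and Ldh1: "L-lipschitz_on K1 dh1"
    using data_lipschitz_on_compact[OF K1] by blast
  obtain M where M: "\<And>u. u \<in> K1 \<Longrightarrow> \<bar>f u\<bar> \<le> M \<and> \<bar>g u\<bar> \<le> M \<and> norm (dg u) \<le> M \<and> norm (dh1 u) \<le> M"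
    using data_bounded_on_compact[OF K1] by blast
  have M0: "0 \<le> M" using M[of "x 0"] ball_K1[of 0] by force
  have K_bounds: "\<bar>f u\<bar> \<le> M \<and> m \<le> g u \<and> g u \<le> M \<and> norm (dg u) \<le> M \<and> norm (dh1 u) \<le> M"
    if "u \<in> K" for u
  proof -
    have "m \<le> g u" using that g_lower unfolding K_def by (auto simp: dist_norm norm_minus_commute)
    then show ?thesis using M[of u] that KK1 by (auto simp: abs_le_iff)
  qed
  have "algorithm1_estimates f g h1 h2 dg dh1 C x z c atil alo \<sigma> r K \<delta> m M L ((L * M + M * L) / m\<^sup>2)"
  proof (unfold_locales)
    show "0 < \<delta>" "0 < m" by (fact \<delta>(1) m)+
    show "\<And>k v. norm (v - x k) \<le> \<delta> \<Longrightarrow> v \<in> K"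
      unfolding K_def using iterates_in_X0 by (auto simp: dist_norm norm_minus_commute)
    show "\<And>u. u \<in> K \<Longrightarrow> m \<le> g u \<and> g u \<le> M \<and> f u \<le> M \<and> norm (dg u) \<le> M \<and> norm (dh1 u) \<le> M"
      using K_bounds by (simp add: abs_le_iff)
    show "L-lipschitz_on K dg" "L-lipschitz_on K dh1"
      using lipschitz_on_subset[OF Ldg KK1] lipschitz_on_subset[OF Ldh1 KK1] by auto
    show "((L * M + M * L) / m\<^sup>2)-lipschitz_on K (\<lambda>u. f u / g u)"
      using K_bounds M0 m
      by (intro lipschitz_on_divide lipschitz_on_subset[OF Lf KK1] lipschitz_on_subset[OF Lg KK1]) auto
    show "\<And>k s. s \<in> cvx_subdiff f (x k) \<Longrightarrow> norm s \<le> L"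
      using cvx_subdiff_norm_le_lipschitz[OF lipschitz_on_subset[OF Lf ball_K1]] by simp
    show "\<And>k. norm (z k) \<le> L"
      using cvx_subdiff_norm_le_lipschitz[OF lipschitz_on_subset[OF Lh2 ball_K1] _ z_sub] by simp
  qed
  then show ?thesis using that by blast
qed

context algorithm1_estimates
begin

lemma iterate_in_K: "x k \<in> K"
  using near_iterates_in_K[of "x k" k] delta_pos by simp

lemma c_bounds: "0 \<le> c k" "c k \<le> M / m"
proof -
  have "m \<le> g (x k)" "f (x k) \<le> M" using bounds_on_K[OF iterate_in_K] by auto
  then show "0 \<le> c k" "c k \<le> M / m"
    unfolding c_def using f_nonneg[of "x k"] m_pos by (auto intro: frac_le)
qed

lemma constants_nonneg: "0 \<le> M" "0 \<le> L" "0 \<le> Lc"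
proof -
  show "0 \<le> M" using bounds_on_K[OF iterate_in_K[of 0]] f_nonneg[of "x 0"] by linarith
  show "0 \<le> L" "0 \<le> Lc" using lipschitz_on_nonneg dg_lipschitz ratio_lipschitz by blast+
qed

lemma linearisation_errors:
  assumes "norm (v - x k) \<le> \<delta>"
  shows "g (x k) + inner (dg (x k)) (v - x k) - L * (norm (v - x k))\<^sup>2 \<le> g v"
    and "h1 v \<le> h1 (x k) + inner (dh1 (x k)) (v - x k) + L * (norm (v - x k))\<^sup>2"
proof -
  have sub: "cball (x k) \<delta> \<subseteq> K" using near_iterates_in_K by (auto simp: dist_norm norm_minus_commute)
  have v: "v \<in> cball (x k) \<delta>" using assms by (simp add: dist_norm norm_minus_commute)
  show "g (x k) + inner (dg (x k)) (v - x k) - L * (norm (v - x k))\<^sup>2 \<le> g v"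
    using has_gradient_remainder_le[OF g_diff lipschitz_on_subset[OF dg_lipschitz sub] v]
    by (simp add: abs_le_iff)
  show "h1 v \<le> h1 (x k) + inner (dh1 (x k)) (v - x k) + L * (norm (v - x k))\<^sup>2"
    using has_gradient_remainder_le[OF h1_diff lipschitz_on_subset[OF dh1_lipschitz sub] v]
    by (simp add: abs_le_iff)
qed

lemma trial_point_near_iterate:
  assumes \<alpha>: "0 < \<alpha>" and small_f: "\<alpha> * (8 * (M / m) * M) \<le> \<delta>\<^sup>2"
    and small_G: "\<alpha> * (4 * (M + (M / m)\<^sup>2 * M + L)) \<le> \<delta>"
    and xh: "xh \<in> trial_set f g C dg dh1 (c k) (x k) (z k) \<alpha>"
  shows "norm (xh - x k) \<le> \<delta>"
proof -
  have ck: "0 \<le> c k" "c k \<le> M / m" "(c k)\<^sup>2 \<le> (M / m)\<^sup>2" using c_bounds[of k] by (auto intro: power_mono)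
  have fx: "f (x k) \<le> M" and dgx: "norm (dg (x k)) \<le> M" and dhx: "norm (dh1 (x k)) \<le> M"
    using bounds_on_K[OF iterate_in_K] by auto
  have "c k * f (x k) \<le> M / m * M"
    using ck fx f_nonneg[of "x k"] constants_nonneg m_pos by (intro mult_mono) auto
  then have "8 * \<alpha> * c k * f (x k) \<le> \<delta>\<^sup>2"
    using mult_left_mono[of "c k * f (x k)" "M / m * M" "8 * \<alpha>"] \<alpha> small_f by (simp add: algebra_simps)
  moreover have "norm (dh1 (x k) - (c k)\<^sup>2 *\<^sub>R dg (x k) - z k) \<le> M + (M / m)\<^sup>2 * M + L"
    using norm_triangle_ineq4[of "dh1 (x k) - (c k)\<^sup>2 *\<^sub>R dg (x k)" "z k"]
      norm_triangle_ineq4[of "dh1 (x k)" "(c k)\<^sup>2 *\<^sub>R dg (x k)"]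
      mult_mono[OF ck(3) dgx] dhx z_bound[of k] by simp
  then have "4 * \<alpha> * norm (dh1 (x k) - (c k)\<^sup>2 *\<^sub>R dg (x k) - z k) \<le> 4 * \<alpha> * (M + (M / m)\<^sup>2 * M + L)"
    using \<alpha> by (intro mult_left_mono) auto
  then have "4 * \<alpha> * norm (dh1 (x k) - (c k)\<^sup>2 *\<^sub>R dg (x k) - z k) \<le> \<delta>"
    using small_G by (simp add: algebra_simps)
  ultimately show ?thesis
    using trial_step_le[OF xh _ f_nonneg ck(1) \<alpha>] X0_feasible(1)[OF iterates_in_X0] by blast
qed

lemma small_steps_accepted:
  obtains \<alpha>b where "0 < \<alpha>b"
    and "\<And>k \<alpha> xh. 0 < \<alpha> \<Longrightarrow> \<alpha> \<le> \<alpha>b \<Longrightarrow> xh \<in> trial_set f g C dg dh1 (c k) (x k) (z k) \<alpha> \<Longrightarrow>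
           accept f g h1 h2 C \<sigma> (x k) (z k) xh"
proof -
  define A1 where "A1 = 8 * (M / m) * M"
  define A2 where "A2 = 4 * (M + (M / m)\<^sup>2 * M + L)"
  define A3 where "A3 = 2 * (M * Lc\<^sup>2 + (M / m)\<^sup>2 * L + L) + \<sigma>"
  have A: "0 \<le> A1" "0 \<le> A2" "0 < A3"
    using constants_nonneg m_pos params(2) unfolding A1_def A2_def A3_def
    by (auto intro!: add_nonneg_pos)
  define \<alpha>b where "\<alpha>b = min (\<delta>\<^sup>2 / (A1 + 1)) (min (\<delta> / (A2 + 1)) (1 / A3))"
  have scaled_le: "\<alpha> * A \<le> B" if "0 \<le> A" "0 < \<alpha>" "\<alpha> \<le> B / (A + 1)" for \<alpha> A B :: real
  proof -
    have "\<alpha> * (A + 1) \<le> B" using that by (simp add: le_divide_eq add_nonneg_pos)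
    then show ?thesis using that by (simp add: algebra_simps)
  qed
  show ?thesis
  proof
    show "0 < \<alpha>b" unfolding \<alpha>b_def using A delta_pos by (auto intro!: divide_pos_pos add_nonneg_pos)
  next
    fix k \<alpha> xh
    assume \<alpha>: "0 < \<alpha>" "\<alpha> \<le> \<alpha>b" and xh: "xh \<in> trial_set f g C dg dh1 (c k) (x k) (z k) \<alpha>"
    have "\<alpha> * A1 \<le> \<delta>\<^sup>2" "\<alpha> * A2 \<le> \<delta>" using \<alpha> A unfolding \<alpha>b_def by (auto intro!: scaled_le)
    then have near: "norm (xh - x k) \<le> \<delta>"
      using trial_point_near_iterate[OF \<alpha>(1) _ _ xh] unfolding A1_def A2_def by blast
    have "(c k)\<^sup>2 \<le> (M / m)\<^sup>2" using c_bounds[of k] by (auto intro: power_mono)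
    then have "\<alpha> * (2 * (M * Lc\<^sup>2 + (c k)\<^sup>2 * L + L) + \<sigma>) \<le> \<alpha> * A3"
      using \<alpha>(1) constants_nonneg unfolding A3_def by (simp add: mult_right_mono)
    also have "\<dots> \<le> 1" using \<alpha> A unfolding \<alpha>b_def by (simp add: le_divide_eq mult.commute)
    finally have step: "\<alpha> * (2 * (M * Lc\<^sup>2 + (c k)\<^sup>2 * L + L) + \<sigma>) \<le> 1" .
    have xhK: "xh \<in> K" by (rule near_iterates_in_K[OF near])
    have "\<bar>f xh / g xh - c k\<bar> \<le> Lc * norm (xh - x k)"
      using lipschitz_onD[OF ratio_lipschitz xhK iterate_in_K] unfolding c_def
      by (simp add: dist_norm dist_real_def)
    moreover have "x k \<in> C" "0 < g (x k)" using X0_feasible iterates_in_X0 by auto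
    ultimately show "accept f g h1 h2 C \<sigma> (x k) (z k) xh"
      using trial_point_accepted[OF xh _ _ c_def z_sub \<alpha>(1) _ _ linearisation_errors[OF near] _ step]
        bounds_on_K[OF xhK] m_pos by force
  qed
qed

text \<open>Backtracking stops at the latest once \<open>r\<^sup>j atil k \<le> \<alpha>b\<close>, so an accepted step is never
  below \<open>min alo (r \<alpha>b)\<close>.\<close>

lemma step_size_lower_bound:
  obtains \<alpha>l where "0 < \<alpha>l"
    and "\<And>k. \<exists>\<alpha> \<ge> \<alpha>l. x (Suc k) \<in> trial_set f g C dg dh1 (c k) (x k) (z k) \<alpha>"
proof -
  obtain \<alpha>b where \<alpha>b: "0 < \<alpha>b"
    and accepted: "\<And>k \<alpha> xh. 0 < \<alpha> \<Longrightarrow> \<alpha> \<le> \<alpha>b \<Longrightarrow> xh \<in> trial_set f g C dg dh1 (c k) (x k) (z k) \<alpha> \<Longrightarrow>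
        accept f g h1 h2 C \<sigma> (x k) (z k) xh"
    using small_steps_accepted by blast
  define \<alpha>l where "\<alpha>l = min alo (r * \<alpha>b)"
  have "\<exists>\<alpha> \<ge> \<alpha>l. x (Suc k) \<in> trial_set f g C dg dh1 (c k) (x k) (z k) \<alpha>" for k
  proof -
    from iter[of k] obtain j xh where
      trial: "\<And>i. i \<le> j \<Longrightarrow> xh i \<in> trial_set f g C dg dh1 (c k) (x k) (z k) (r ^ i * atil k)"
      and rejected: "\<And>i. i < j \<Longrightarrow> \<not> accept f g h1 h2 C \<sigma> (x k) (z k) (xh i)"
      and next_eq: "x (Suc k) = xh j"
      unfolding alg_step_def by blast
    have "\<alpha>l \<le> r ^ j * atil k"
    proof (cases j)
      case 0
      then show ?thesis using atil_range[of k] unfolding \<alpha>l_def by simp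
    next
      case (Suc i)
      have "0 < r ^ i * atil k" using params atil_range[of k] by simp
      then have "\<alpha>b < r ^ i * atil k"
        using accepted[OF _ _ trial[of i]] rejected[of i] Suc by force
      then have "r * \<alpha>b \<le> r ^ j * atil k" using Suc params by simp
      then show ?thesis unfolding \<alpha>l_def by simp
    qed
    then show ?thesis using trial[of j] next_eq by auto
  qed
  moreover have "0 < \<alpha>l" unfolding \<alpha>l_def using params \<alpha>b by simp
  ultimately show ?thesis using that by blast
qed

definition step_subgradient :: "real \<Rightarrow> 'a \<Rightarrow> nat \<Rightarrow> 'a \<times> 'a \<times> real" where
  "step_subgradient \<alpha> s k =
     ((1 / \<alpha>) *\<^sub>R (x k - x (Suc k)) + (dh1 (x (Suc k)) - dh1 (x k))
        + (c k)\<^sup>2 *\<^sub>R (dg (x k) - dg (x (Suc k))) + ((c k)\<^sup>2 - (c (Suc k))\<^sup>2) *\<^sub>R dg (x (Suc k))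
        + (2 * (c (Suc k) - c k)) *\<^sub>R s, x k - x (Suc k), 0)"

lemma step_subgradient_in_limiting_subdiff:
  assumes \<alpha>: "0 < \<alpha>" and trial: "x (Suc k) \<in> trial_set f g C dg dh1 (c k) (x k) (z k) \<alpha>"
  shows "\<exists>s \<in> cvx_subdiff f (x (Suc k)).
           step_subgradient \<alpha> s k \<in> limiting_subdiff H (x (Suc k), z k, c (Suc k))"
proof -
  have "isCont f (x (Suc k))"
    using convex_on_continuous[OF open_UNIV f_convex] by (simp add: continuous_on_eq_continuous_at)
  moreover have "c (Suc k) * g (x (Suc k)) = f (x (Suc k))"
    using X0_feasible(2)[OF iterates_in_X0, of "Suc k"] unfolding c_def by simp
  ultimately show ?thesis
    using trial_point_limiting_subgradient[OF f_convex _ g_diff h1_diff C_convex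
        X0_feasible(1)[OF iterates_in_X0] trial \<alpha> c_bounds(1) c_bounds(1) _ z_sub]
    unfolding step_subgradient_def by blast
qed

lemma norm_step_subgradient_le:
  assumes \<alpha>: "0 < \<alpha>l" "\<alpha>l \<le> \<alpha>" and s: "s \<in> cvx_subdiff f (x (Suc k))"
  shows "norm (step_subgradient \<alpha> s k)
           \<le> (1 / \<alpha>l + L + 2 * (M / m) * Lc * M + (M / m)\<^sup>2 * L + 2 * Lc * L + 1) * norm (x (Suc k) - x k)"
proof -
  define d where "d = norm (x (Suc k) - x k)"
  define Mc where "Mc = M / m"
  have Mc: "0 \<le> Mc" unfolding Mc_def using constants_nonneg m_pos by simp
  have ck: "0 \<le> c k" "c k \<le> Mc" and ck1: "0 \<le> c (Suc k)" "c (Suc k) \<le> Mc"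
    using c_bounds unfolding Mc_def by auto
  have lip: "norm (dh1 (x (Suc k)) - dh1 (x k)) \<le> L * d" "norm (dg (x k) - dg (x (Suc k))) \<le> L * d"
    "\<bar>c (Suc k) - c k\<bar> \<le> Lc * d"
    using lipschitz_onD[OF dh1_lipschitz iterate_in_K iterate_in_K, of "Suc k" k]
      lipschitz_onD[OF dg_lipschitz iterate_in_K iterate_in_K, of k "Suc k"]
      lipschitz_onD[OF ratio_lipschitz iterate_in_K iterate_in_K, of "Suc k" k]
    unfolding d_def c_def by (simp_all add: dist_norm dist_real_def norm_minus_commute)
  have "norm ((1 / \<alpha>) *\<^sub>R (x k - x (Suc k))) \<le> 1 / \<alpha>l * d"
    unfolding d_def using \<alpha> by (simp add: norm_minus_commute frac_le mult_right_mono)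
  moreover have "norm ((c k)\<^sup>2 *\<^sub>R (dg (x k) - dg (x (Suc k)))) \<le> Mc\<^sup>2 * L * d"
    using mult_mono[OF power_mono[OF ck(2,1)] lip(2)] constants_nonneg by (simp add: mult.assoc)
  moreover have "norm (((c k)\<^sup>2 - (c (Suc k))\<^sup>2) *\<^sub>R dg (x (Suc k))) \<le> 2 * Mc * Lc * M * d"
  proof -
    have "(c k)\<^sup>2 - (c (Suc k))\<^sup>2 = (c k - c (Suc k)) * (c k + c (Suc k))"
      by (simp add: power2_eq_square algebra_simps)
    then have "\<bar>(c k)\<^sup>2 - (c (Suc k))\<^sup>2\<bar> = \<bar>c (Suc k) - c k\<bar> * (c k + c (Suc k))"
      using ck ck1 by (simp add: abs_mult abs_minus_commute)
    also have "\<dots> \<le> (Lc * d) * (2 * Mc)" using lip(3) ck ck1 by (intro mult_mono) auto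
    finally have "\<bar>(c k)\<^sup>2 - (c (Suc k))\<^sup>2\<bar> * norm (dg (x (Suc k))) \<le> (Lc * d) * (2 * Mc) * M"
      using bounds_on_K[OF iterate_in_K[of "Suc k"]] constants_nonneg Mc
      by (intro mult_mono) (auto simp: d_def)
    then show ?thesis by (simp only: norm_scaleR real_norm_def) (simp add: algebra_simps)
  qed
  moreover have "norm ((2 * (c (Suc k) - c k)) *\<^sub>R s) \<le> 2 * Lc * L * d"
    using mult_mono[OF lip(3) f_subgrad_bound[OF s]] constants_nonneg
    by (simp only: norm_scaleR abs_mult abs_numeral) (simp add: algebra_simps d_def)
  moreover have "norm (step_subgradient \<alpha> s k)
      \<le> norm ((1 / \<alpha>) *\<^sub>R (x k - x (Suc k))) + norm (dh1 (x (Suc k)) - dh1 (x k))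
        + norm ((c k)\<^sup>2 *\<^sub>R (dg (x k) - dg (x (Suc k))))
        + norm (((c k)\<^sup>2 - (c (Suc k))\<^sup>2) *\<^sub>R dg (x (Suc k))) + norm ((2 * (c (Suc k) - c k)) *\<^sub>R s) + d"
    unfolding step_subgradient_def d_def
    by (rule order_trans[OF norm_Pair_le])
      (simp add: norm_Pair norm_minus_commute norm_triangle_le add_mono)
  ultimately have "norm (step_subgradient \<alpha> s k)
      \<le> 1 / \<alpha>l * d + L * d + Mc\<^sup>2 * L * d + 2 * Mc * Lc * M * d + 2 * Lc * L * d + d"
    using lip(1) by linarith
  then show ?thesis unfolding Mc_def d_def by (simp add: algebra_simps)
qed

lemma subgradient_bound:
  obtains b where "0 < b"
    and "\<And>k. \<exists>v \<in> limiting_subdiff H (x (Suc k), z k, c (Suc k)).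
                 norm v \<le> b * norm (x (Suc k) - x k)"
proof -
  obtain \<alpha>l where \<alpha>l: "0 < \<alpha>l"
    and steps: "\<And>k. \<exists>\<alpha> \<ge> \<alpha>l. x (Suc k) \<in> trial_set f g C dg dh1 (c k) (x k) (z k) \<alpha>"
    using step_size_lower_bound by blast
  define b where "b = 1 / \<alpha>l + L + 2 * (M / m) * Lc * M + (M / m)\<^sup>2 * L + 2 * Lc * L + 1"
  have "\<exists>v \<in> limiting_subdiff H (x (Suc k), z k, c (Suc k)). norm v \<le> b * norm (x (Suc k) - x k)" for k
  proof -
    obtain \<alpha> where \<alpha>: "\<alpha>l \<le> \<alpha>" and trial: "x (Suc k) \<in> trial_set f g C dg dh1 (c k) (x k) (z k) \<alpha>"
      using steps by blast
    have "0 < \<alpha>" using \<alpha> \<alpha>l by simp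
    then obtain s where "s \<in> cvx_subdiff f (x (Suc k))"
      and "step_subgradient \<alpha> s k \<in> limiting_subdiff H (x (Suc k), z k, c (Suc k))"
      using step_subgradient_in_limiting_subdiff[OF _ trial] by blast
    then show ?thesis using norm_step_subgradient_le[OF \<alpha>l \<alpha>] unfolding b_def by blast
  qed
  moreover have "0 < b"
    unfolding b_def using \<alpha>l constants_nonneg m_pos by (simp add: add_pos_nonneg)
  ultimately show ?thesis using that by blast
qed

end

text \<open>Closedness of \<open>C\<close>, \<open>C \<inter> \<Omega> \<noteq> {}\<close> and the upper bound \<open>ahi\<close> only make Algorithm 1
  well defined; since the iterates are given through \<open>iter\<close>, the proof does not use them.\<close>

theorem proposition5p2:
  fixes f g h1 h2 :: "'a::euclidean_space \<Rightarrow> real"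
    and dg dh1 :: "'a \<Rightarrow> 'a"
    and C :: "'a set"
    and x z :: "nat \<Rightarrow> 'a" and c atil :: "nat \<Rightarrow> real"
    and alo ahi \<sigma> r :: real
  assumes f_nonneg: "\<And>u. f u \<ge> 0"
    and g_nonneg: "\<And>u. g u \<ge> 0"
    and C_closed: "closed C" and C_convex: "convex C"
    and C_Omega: "C \<inter> {u. g u \<noteq> 0} \<noteq> {}"
    and f_convex: "convex_on UNIV f"
    and g_diff: "\<And>u. (g has_derivative (\<lambda>v. inner (dg u) v)) (at u)"
    and dg_loclip: "\<And>u. \<exists>U L. open U \<and> u \<in> U \<and> L-lipschitz_on U dg"
    and h1_diff: "\<And>u. (h1 has_derivative (\<lambda>v. inner (dh1 u) v)) (at u)"
    and dh1_loclip: "\<And>u. \<exists>U L. open U \<and> u \<in> U \<and> L-lipschitz_on U dh1"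
    and h2_convex: "convex_on UNIV h2"
    and params: "0 < alo" "alo < ahi" "0 < \<sigma>" "0 < r" "r < 1"
    and x0_dom: "Fobj f g h1 h2 C (x 0) < \<infinity>"
    and X0_compact: "compact {u. Fobj f g h1 h2 C u < \<infinity> \<and> Fobj f g h1 h2 C u \<le> Fobj f g h1 h2 C (x 0)}"
    and c_def: "\<And>k. c k = f (x k) / g (x k)"
    and z_sub: "\<And>k. z k \<in> cvx_subdiff h2 (x k)"
    and atil_range: "\<And>k. alo \<le> atil k \<and> atil k \<le> ahi"
    and iter: "\<And>k. alg_step f g h1 h2 C dg dh1 \<sigma> r (x k) (c k) (z k) (atil k) (x (Suc k))"
  shows "(\<exists>a>0. \<forall>k\<ge>1.
            Hfun f g h1 h2 C (x (k + 1), z k, c (k + 1)) + ereal (a * (norm (x (k + 1) - x k))\<^sup>2)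
              \<le> Hfun f g h1 h2 C (x k, z (k - 1), c k))
       \<and> (\<exists>b>0. \<forall>k.
            limiting_subdiff (Hfun f g h1 h2 C) (x (k + 1), z k, c (k + 1)) \<noteq> {} \<and>
            infdist 0 (limiting_subdiff (Hfun f g h1 h2 C) (x (k + 1), z k, c (k + 1)))
              \<le> b * norm (x (k + 1) - x k))"
proof -
  interpret algorithm1 f g h1 h2 dg dh1 C x z c atil alo \<sigma> r
    by unfold_locales
      (fact f_nonneg g_nonneg C_convex f_convex g_diff dg_loclip h1_diff dh1_loclip h2_convex
        params(1,3-5) x0_dom X0_compact c_def z_sub atil_range[THEN conjunct1] iter)+
  obtain K \<delta> m M L Lc
    where "algorithm1_estimates f g h1 h2 dg dh1 C x z c atil alo \<sigma> r K \<delta> m M L Lc"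
    using uniform_estimates by blast
  then interpret algorithm1_estimates f g h1 h2 dg dh1 C x z c atil alo \<sigma> r K \<delta> m M L Lc .
  obtain b where b: "0 < b" and subgrad: "\<And>k. \<exists>v \<in> limiting_subdiff H (x (Suc k), z k, c (Suc k)).
      norm v \<le> b * norm (x (Suc k) - x k)"
    using subgradient_bound by blast
  have "\<exists>a>0. \<forall>k\<ge>1. H (x (k + 1), z k, c (k + 1)) + ereal (a * (norm (x (k + 1) - x k))\<^sup>2)
                          \<le> H (x k, z (k - 1), c k)"
    using H_descent \<open>0 < \<sigma>\<close> by (intro exI[of _ "\<sigma> / 2"]) auto
  moreover have "limiting_subdiff H (x (k + 1), z k, c (k + 1)) \<noteq> {} \<and>
      infdist 0 (limiting_subdiff H (x (k + 1), z k, c (k + 1))) \<le> b * norm (x (k + 1) - x k)" for k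
    using subgrad[of k] infdist_le[of _ "limiting_subdiff H (x (Suc k), z k, c (Suc k))" 0]
    by (auto intro: order_trans)
  ultimately show ?thesis using b by blast
qed

end
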